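(* Let $\xi=(\xi_1,\xi_2)\in\mathfrak{so}(n)\times\mathfrak{so}(k)$ and $X\in\mathrm{St}(n,k)$. For $t\in I$ let $$\alpha(t)=\int_0^t\exp\!\big(s(\mathrm{ad}_{\xi_{\mathfrak h}}+\tfrac12\,\mathrm{pr}_{\mathfrak p}\circ\mathrm{ad}_{\xi_{\mathfrak p}})\big)(\xi_{\mathfrak p})\,ds,\quad q(t)=\exp(t\xi)\exp(-t\xi_{\mathfrak h})=(e^{t\xi_1}e^{-t\xi_{1,\mathfrak h}},e^{t\xi_2}e^{-t\xi_{2,\mathfrak h}}),$$ $$S(t)=\mathrm{Ad}_{\exp(t\xi_{\mathfrak h})}\circ\exp\!\big(-t(\mathrm{ad}_{\xi_{\mathfrak h}}+\tfrac12\,\mathrm{pr}_{\mathfrak p}\circ\mathrm{ad}_{\xi_{\mathfrak p}})\big),\quad A(t)=d_{q(t)}\pi\circ d_{(I_n,I_k)}L_{q(t)}\circ S(t),$$ $$T(t)=\Phi_{\exp(t\xi_{\mathfrak h})}\circ\exp\!\big(-t\,P_X^\perp\circ f_{(\xi_1,\xi_2)}\big)\colon N_X\mathrm{St}(n,k)\to N_X\mathrm{St}(n,k).$$ Set $\beta(t)=d_{(I_n,I_k)}(\iota_X\circ\pi)(\alpha(t))$, $\widehat\beta(t)=\iota_X(\pi(\exp(t\xi)))=e^{t\xi_1}Xe^{-t\xi_2}$, $B(t)=d_{\pi(\exp(t\xi))}\iota_X\circ A(t)\circ\big(d_{(I_n,I_k)}(\iota_X\circ\pi)|_{\mathfrak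 p}\big)^{-1}$ and $C(t)=\Phi_{q(t)}\circ T(t)$. Then $(\beta(t),\widehat\beta(t),B(t),C(t))$ is an extrinsic rolling of $T_X\mathrm{St}(n,k)$ over $\mathrm{St}(n,k)$ with respect to the Euclidean metric.
   Context: $\mathrm{St}(n,k)=\{Y\in\mathbb{R}^{n\times k}:Y^\top Y=I_k\}$ with metric $\langle V,W\rangle=2\operatorname{tr}(V^\top W)$ ("Euclidean metric"). $G=O(n)\times O(k)$ acts on $\mathbb{R}^{n\times k}$ by $\Phi_{(R,\theta)}(V)=RV\theta^\top$; $H$ is the stabilizer of $X$, $\pi\colon G\to G/H$, $\iota_X\colon G/H\to\mathrm{St}(n,k)$, $(R,\theta)H\mapsto RX\theta^\top$; $L_g$ left translation. $\mathfrak g=\mathfrak{so}(n)\times\mathfrak{so}(k)$ with scalar product $\langle(\Omega_1,\Psi_1),(\Omega_2,\Psi_2)\rangle=-\operatorname{tr}(\Omega_1\Omega_2)+2\operatorname{tr}(\Psi_1\Psi_2)$, $\mathfrak h=\{(\Omega,\eta):\Omega X=X\eta\}$, $\mathfrak p=\mathfrak h^\perp$, $\mathrm{pr}_{\mathfrak p}(\Omega,\eta)=(XX^\top\Omega+\Omega XX^\top-2X\eta X^\top,\,X^\top\Omega X-\eta)$, and $\xi_{\mathfrak h}=(\xi_{1,\mathfrak h},\xi_{2,\mathfrak h})$, $\xi_{\mathfrak p}$ the components of $\xi$ in $\mathfrak g=\mathfrak h\oplus\mathfrak p$. $G/H$ carries the $G$-invariant metric making $\pi$ a pseudo-Riemannian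 submersion; $d_{(I_n,I_k)}(\iota_X\circ\pi)|_{\mathfrak p}\colon\mathfrak p\to T_X\mathrm{St}(n,k)$, $(\Omega,\eta)\mapsto\Omega X-X\eta$, is a linear isometry with inverse $V\mapsto(VX^\top-XV^\top,X^\top V)$. $T_Y\mathrm{St}(n,k)=\{V:Y^\top V+V^\top Y=0\}$, $N_Y\mathrm{St}(n,k)$ its Frobenius-orthogonal complement, $P_X^\perp(V)=\tfrac12X(X^\top V+V^\top X)$, $f_{(\xi_1,\xi_2)}(V)=\xi_1V-V\xi_2$. The subspace $T_X\mathrm{St}(n,k)$ is viewed as a submanifold with tangent space $T_X\mathrm{St}(n,k)$ and normal space $N_X\mathrm{St}(n,k)$ everywhere. An extrinsic rolling of $M$ over $\widehat M$ is a quadruple of curves $\alpha$ in $M$, $\widehat\alpha$ in $\widehat M$ and linear isometries $A(t)\colon T_{\alpha(t)}M\to T_{\widehat\alpha(t)}\widehat M$, $C(t)\colon N_{\alpha(t)}M\to N_{\widehat\alpha(t)}\widehat M$ with $\dot{\widehat\alpha}=A\dot\alpha$, $A(t)Z(t)$ parallel along $\widehat\alpha$ iff $Z$ parallel along $\alpha$, and $C(t)Z(t)$ normal parallel along $\widehat\alpha$ iff $Z$ normal parallel along $\alpha$ (normal parallel: the normal component of $\tfrac{d}{dt}Z$ vanishes). *)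

theory Defs
  imports "HOL-Analysis.Analysis"
begin

definition orth_proj :: "('v \<Rightarrow> 'v \<Rightarrow> real) \<Rightarrow> 'v::real_vector set \<Rightarrow> 'v \<Rightarrow> 'v" where
  "orth_proj g S v = (THE w. w \<in> S \<and> (\<forall>u\<in>S. g (v - w) u = 0))"

definition lin_isometry ::
  "('v \<Rightarrow> 'v \<Rightarrow> real) \<Rightarrow> 'v::real_vector set \<Rightarrow> 'v set \<Rightarrow> ('v \<Rightarrow> 'v) \<Rightarrow> bool" where
  "lin_isometry g S S' F \<longleftrightarrow>
     (\<forall>x\<in>S. \<forall>y\<in>S. \<forall>a b. F (a *\<^sub>R x + b *\<^sub>R y) = a *\<^sub>R F x + b *\<^sub>R F y) \<and>
     F ` S = S' \<and>
     (\<forall>x\<in>S. \<forall>y\<in>S. g (F x) (F y) = g x y)"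

text \<open>Z is a parallel tangent vector field along the curve c (defined on I) of a submanifold of
  Euclidean space with tangent spaces TM: Z is tangent, differentiable, and the tangential
  component of its derivative vanishes (Levi-Civita connection of the induced metric).\<close>
definition tangent_parallel ::
  "('v \<Rightarrow> 'v \<Rightarrow> real) \<Rightarrow> real set \<Rightarrow> ('v \<Rightarrow> 'v set) \<Rightarrow> (real \<Rightarrow> 'v) \<Rightarrow> (real \<Rightarrow> 'v::real_normed_vector) \<Rightarrow> bool" where
  "tangent_parallel g I TM c Z \<longleftrightarrow>
     (\<forall>t\<in>I. Z t \<in> TM (c t)) \<and>
     (\<forall>t\<in>I. \<exists>D. (Z has_vector_derivative D) (at t within I) \<and> orth_proj g (TM (c t)) D = 0)"

definition normal_parallel ::
  "('v \<Rightarrow> 'v \<Rightarrow> real) \<Rightarrow> real set \<Rightarrow> ('v \<Rightarrow> 'v set) \<Rightarrow> (real \<Rightarrow> 'v) \<Rightarrow> (real \<Rightarrow> 'v::real_normed_vector) \<Rightarrow> bool" where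
  "normal_parallel g I NM c Z \<longleftrightarrow>
     (\<forall>t\<in>I. Z t \<in> NM (c t)) \<and>
     (\<forall>t\<in>I. \<exists>D. (Z has_vector_derivative D) (at t within I) \<and> orth_proj g (NM (c t)) D = 0)"

definition extrinsic_rolling ::
  "('v \<Rightarrow> 'v \<Rightarrow> real) \<Rightarrow> real set \<Rightarrow>
   'v set \<Rightarrow> ('v \<Rightarrow> 'v set) \<Rightarrow> ('v \<Rightarrow> 'v set) \<Rightarrow>
   'v set \<Rightarrow> ('v \<Rightarrow> 'v set) \<Rightarrow> ('v \<Rightarrow> 'v set) \<Rightarrow>
   (real \<Rightarrow> 'v) \<Rightarrow> (real \<Rightarrow> 'v) \<Rightarrow> (real \<Rightarrow> 'v \<Rightarrow> 'v) \<Rightarrow> (real \<Rightarrow> 'v \<Rightarrow> 'v::real_normed_vector) \<Rightarrow> bool" where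
  "extrinsic_rolling g I M TM NM M' TM' NM' a a' A C \<longleftrightarrow>
     (\<forall>t\<in>I. a t \<in> M \<and> a' t \<in> M') \<and>
     (\<forall>t\<in>I. lin_isometry g (TM (a t)) (TM' (a' t)) (A t)) \<and>
     (\<forall>t\<in>I. lin_isometry g (NM (a t)) (NM' (a' t)) (C t)) \<and>
     (\<forall>t\<in>I. \<exists>v. (a has_vector_derivative v) (at t within I) \<and>
                 (a' has_vector_derivative A t v) (at t within I)) \<and>
     (\<forall>Z. (\<forall>t\<in>I. Z t \<in> TM (a t)) \<longrightarrow>
        (tangent_parallel g I TM' a' (\<lambda>t. A t (Z t)) \<longleftrightarrow> tangent_parallel g I TM a Z)) \<and>
     (\<forall>Z. (\<forall>t\<in>I. Z t \<in> NM (a t)) \<longrightarrow>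
        (normal_parallel g I NM' a' (\<lambda>t. C t (Z t)) \<longleftrightarrow> normal_parallel g I NM a Z))"

definition op_exp :: "('a \<Rightarrow> 'a) \<Rightarrow> 'a \<Rightarrow> 'a::real_normed_vector" where
  "op_exp L v = (\<Sum>m. (1 / fact m) *\<^sub>R (L ^^ m) v)"

definition mexp :: "real^'n^'n \<Rightarrow> real^'n^'n" where
  "mexp A = (\<Sum>m. (1 / fact m) *\<^sub>R ((\<lambda>M. A ** M) ^^ m) (mat 1))"

definition integral0 :: "real \<Rightarrow> (real \<Rightarrow> 'a::real_normed_vector) \<Rightarrow> 'a" where
  "integral0 t f = (if 0 \<le> t then integral {0..t} f else - integral {t..0} f)"

definition stiefel :: "(real^'k^'n) set" where
  "stiefel = {Y. transpose Y ** Y = mat 1}"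

definition stiefel_tangent :: "real^'k^'n \<Rightarrow> (real^'k^'n) set" where
  "stiefel_tangent Y = {V. transpose Y ** V + transpose V ** Y = 0}"

definition stiefel_normal :: "real^'k^'n \<Rightarrow> (real^'k^'n) set" where
  "stiefel_normal Y = {V. \<forall>W\<in>stiefel_tangent Y. trace (transpose V ** W) = 0}"

definition euclid_metric :: "real^'k^'n \<Rightarrow> real^'k^'n \<Rightarrow> real" where
  "euclid_metric V W = 2 * trace (transpose V ** W)"

type_synonym ('n,'k) lalg = "(real^'n^'n) \<times> (real^'k^'k)"

definition skew :: "real^'m^'m \<Rightarrow> bool" where
  "skew A \<longleftrightarrow> transpose A = - A"

definition lie_br :: "('n::finite,'k::finite) lalg \<Rightarrow> ('n,'k) lalg \<Rightarrow> ('n,'k) lalg" where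
  "lie_br x y = (fst x ** fst y - fst y ** fst x, snd x ** snd y - snd y ** snd x)"

definition ad :: "('n::finite,'k::finite) lalg \<Rightarrow> ('n,'k) lalg \<Rightarrow> ('n,'k) lalg" where
  "ad x = lie_br x"

definition Ad :: "('n::finite,'k::finite) lalg \<Rightarrow> ('n,'k) lalg \<Rightarrow> ('n,'k) lalg" where
  "Ad g y = (fst g ** fst y ** matrix_inv (fst g), snd g ** snd y ** matrix_inv (snd g))"

definition gexp :: "real \<Rightarrow> ('n::finite,'k::finite) lalg \<Rightarrow> ('n,'k) lalg" where
  "gexp t x = (mexp (t *\<^sub>R fst x), mexp (t *\<^sub>R snd x))"

definition Phi :: "('n::finite,'k::finite) lalg \<Rightarrow> real^'k^'n \<Rightarrow> real^'k^'n" where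
  "Phi g V = fst g ** V ** transpose (snd g)"

text \<open>Orthogonal projection of g onto p = h^perp (formula from the paper).\<close>
definition pr_p :: "real^'k^'n \<Rightarrow> ('n::finite,'k::finite) lalg \<Rightarrow> ('n,'k) lalg" where
  "pr_p X y = (X ** transpose X ** fst y + fst y ** X ** transpose X - 2 *\<^sub>R (X ** snd y ** transpose X),
               transpose X ** fst y ** X - snd y)"

definition xi_p :: "real^'k^'n \<Rightarrow> ('n::finite,'k::finite) lalg \<Rightarrow> ('n,'k) lalg" where
  "xi_p X xi = pr_p X xi"

definition xi_h :: "real^'k^'n \<Rightarrow> ('n::finite,'k::finite) lalg \<Rightarrow> ('n,'k) lalg" where
  "xi_h X xi = xi - xi_p X xi"

definition Lop :: "real^'k^'n \<Rightarrow> ('n::finite,'k::finite) lalg \<Rightarrow> ('n,'k) lalg \<Rightarrow> ('n,'k) lalg" where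
  "Lop X xi y = ad (xi_h X xi) y + (1/2) *\<^sub>R pr_p X (ad (xi_p X xi) y)"

text \<open>d_(I_n,I_k)(iota_X o pi) and the inverse of its restriction to p.\<close>
definition d_iota_pi :: "real^'k^'n \<Rightarrow> ('n::finite,'k::finite) lalg \<Rightarrow> real^'k^'n" where
  "d_iota_pi X y = fst y ** X - X ** snd y"

definition d_iota_pi_inv :: "real^'k^'n \<Rightarrow> real^'k^'n \<Rightarrow> ('n::finite,'k::finite) lalg" where
  "d_iota_pi_inv X V = (V ** transpose X - X ** transpose V, transpose X ** V)"

definition P_perp :: "real^'k^'n \<Rightarrow> real^'k^'n \<Rightarrow> real^'k^'n" where
  "P_perp X V = (1/2) *\<^sub>R (X ** (transpose X ** V + transpose V ** X))"

definition f_xi :: "('n::finite,'k::finite) lalg \<Rightarrow> real^'k^'n \<Rightarrow> real^'k^'n" where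
  "f_xi xi V = fst xi ** V - V ** snd xi"

definition roll_alpha :: "real^'k^'n \<Rightarrow> ('n::finite,'k::finite) lalg \<Rightarrow> real \<Rightarrow> ('n,'k) lalg" where
  "roll_alpha X xi t = integral0 t (\<lambda>s. op_exp (\<lambda>y. s *\<^sub>R Lop X xi y) (xi_p X xi))"

definition roll_q :: "real^'k^'n \<Rightarrow> ('n::finite,'k::finite) lalg \<Rightarrow> real \<Rightarrow> ('n,'k) lalg" where
  "roll_q X xi t = (mexp (t *\<^sub>R fst xi) ** mexp (- t *\<^sub>R fst (xi_h X xi)),
                    mexp (t *\<^sub>R snd xi) ** mexp (- t *\<^sub>R snd (xi_h X xi)))"

definition roll_S :: "real^'k^'n \<Rightarrow> ('n::finite,'k::finite) lalg \<Rightarrow> real \<Rightarrow> ('n,'k) lalg \<Rightarrow> ('n,'k) lalg" where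
  "roll_S X xi t = Ad (gexp t (xi_h X xi)) \<circ> op_exp (\<lambda>y. (- t) *\<^sub>R Lop X xi y)"

definition roll_T :: "real^'k^'n \<Rightarrow> ('n::finite,'k::finite) lalg \<Rightarrow> real \<Rightarrow> real^'k^'n \<Rightarrow> real^'k^'n" where
  "roll_T X xi t = Phi (gexp t (xi_h X xi)) \<circ> op_exp (\<lambda>V. (- t) *\<^sub>R P_perp X (f_xi xi V))"

definition roll_beta :: "real^'k^'n \<Rightarrow> ('n::finite,'k::finite) lalg \<Rightarrow> real \<Rightarrow> real^'k^'n" where
  "roll_beta X xi t = d_iota_pi X (roll_alpha X xi t)"

definition roll_beta_hat :: "real^'k^'n \<Rightarrow> ('n::finite,'k::finite) lalg \<Rightarrow> real \<Rightarrow> real^'k^'n" where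
  "roll_beta_hat X xi t = Phi (gexp t xi) X"

text \<open>B(t) = d iota o A(t) o (d(iota o pi)|_p)^{-1}, where
  d iota o d pi_q o d L_q = d_(I,I)(iota_X o pi o L_q) = Phi_q o d_(I,I)(iota_X o pi).\<close>
definition roll_B :: "real^'k^'n \<Rightarrow> ('n::finite,'k::finite) lalg \<Rightarrow> real \<Rightarrow> real^'k^'n \<Rightarrow> real^'k^'n" where
  "roll_B X xi t V = Phi (roll_q X xi t) (d_iota_pi X (roll_S X xi t (d_iota_pi_inv X V)))"

definition roll_C :: "real^'k^'n \<Rightarrow> ('n::finite,'k::finite) lalg \<Rightarrow> real \<Rightarrow> real^'k^'n \<Rightarrow> real^'k^'n" where
  "roll_C X xi t = Phi (roll_q X xi t) \<circ> roll_T X xi t"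

end

theory Submission
  imports Defs
begin

text \<open>
  Let \<open>P\<close> be the orthogonal projection onto the tangent (or normal) space at \<open>X\<close> and
  \<open>K = P \<circ> f\<^sub>\<xi> \<circ> P\<close> the compression of the infinitesimal action \<open>f\<^sub>\<xi>\<close> to it.
  The map \<open>V \<mapsto> \<Phi>\<^bsub>exp(t\<xi>)\<^esub>(exp(-tK) V)\<close> carries the fibre at \<open>X\<close> isometrically onto the
  fibre at \<open>\<Phi>\<^bsub>exp(t\<xi>)\<^esub> X\<close>: \<open>\<Phi>\<close> acts by orthogonal maps, \<open>K\<close> is skew-adjoint, and \<open>P\<close> is
  \<open>\<Phi>\<close>-equivariant. Writing a field along the orbit as \<open>\<Phi>\<^bsub>exp(t\<xi>)\<^esub> U(t)\<close> and its preimage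
  as \<open>exp(tK) U(t)\<close>, both are (normal) parallel iff \<open>U' = -K U\<close>, so parallel fields
  correspond.

  Under the isometry \<open>\<pp> \<cong> T\<^sub>XSt(n,k)\<close> the operator
  \<open>ad\<^bsub>\<xi>\<^sub>\<hh>\<^esub> + 1/2 pr\<^sub>\<pp> \<circ> ad\<^bsub>\<xi>\<^sub>\<pp>\<^esub>\<close> becomes the tangential compression of \<open>f\<^sub>\<xi>\<close>, and
  \<open>q(t) exp(t\<xi>\<^sub>\<hh>) = exp(t\<xi>)\<close> with \<open>exp(t\<xi>\<^sub>\<hh>)\<close> fixing \<open>X\<close>; so \<open>B(t)\<close> and \<open>C(t)\<close> are
  exactly these maps. Finally \<open>\<beta>' = exp(tK)(f\<^sub>\<xi> X)\<close>, which \<open>B(t)\<close> sends to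
  \<open>\<Phi>\<^bsub>exp(t\<xi>)\<^esub>(f\<^sub>\<xi> X)\<close>, the velocity of the orbit.
\<close>

section \<open>Exponentials of linear operators\<close>

text \<open>The library's \<open>exp\<close> lives in Banach algebras, so the endomorphisms of a Euclidean space
  are wrapped into a type on which composition is the multiplication.\<close>

typedef (overloaded) ('a::euclidean_space) endo = "UNIV :: ('a \<Rightarrow>\<^sub>L 'a) set"
  by auto

setup_lifting type_definition_endo

instantiation endo :: (euclidean_space) real_normed_algebra_1
begin

lift_definition zero_endo :: "'a endo" is 0 .
lift_definition one_endo :: "'a endo" is id_blinfun .
lift_definition plus_endo :: "'a endo \<Rightarrow> 'a endo \<Rightarrow> 'a endo" is "(+)" .
lift_definition minus_endo :: "'a endo \<Rightarrow> 'a endo \<Rightarrow> 'a endo" is "(-)" .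
lift_definition uminus_endo :: "'a endo \<Rightarrow> 'a endo" is uminus .
lift_definition scaleR_endo :: "real \<Rightarrow> 'a endo \<Rightarrow> 'a endo" is scaleR .
lift_definition times_endo :: "'a endo \<Rightarrow> 'a endo \<Rightarrow> 'a endo" is "(o\<^sub>L)" .
lift_definition norm_endo :: "'a endo \<Rightarrow> real" is norm .
definition dist_endo :: "'a endo \<Rightarrow> 'a endo \<Rightarrow> real" where "dist_endo a b = norm (a - b)"
definition sgn_endo :: "'a endo \<Rightarrow> 'a endo" where "sgn_endo a = inverse (norm a) *\<^sub>R a"
definition uniformity_endo :: "('a endo \<times> 'a endo) filter" where
  "uniformity_endo = (INF e\<in>{0<..}. principal {(x, y). dist x y < e})"
definition open_endo :: "'a endo set \<Rightarrow> bool" where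
  "open_endo U = (\<forall>x\<in>U. \<forall>\<^sub>F (x', y) in uniformity. x' = x \<longrightarrow> y \<in> U)"

instance
proof
  fix a b c :: "'a endo" and r s :: real
  show "a + b + c = a + (b + c)" by transfer (simp add: algebra_simps)
  show "a + b = b + a" by transfer (simp add: algebra_simps)
  show "0 + a = a" by transfer simp
  show "- a + a = 0" by transfer simp
  show "a - b = a + - b" by transfer simp
  show "r *\<^sub>R (a + b) = r *\<^sub>R a + r *\<^sub>R b" by transfer (simp add: algebra_simps)
  show "(r + s) *\<^sub>R a = r *\<^sub>R a + s *\<^sub>R a" by transfer (simp add: algebra_simps)
  show "r *\<^sub>R s *\<^sub>R a = (r * s) *\<^sub>R a" by transfer simp
  show "1 *\<^sub>R a = a" by transfer simp
  show "a * b * c = a * (b * c)" by transfer (simp add: blinfun_eqI)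
  show "(a + b) * c = a * c + b * c" by transfer (simp add: blinfun_eqI blinfun.bilinear_simps)
  show "a * (b + c) = a * b + a * c" by transfer (simp add: blinfun_eqI blinfun.bilinear_simps)
  show "r *\<^sub>R a * b = r *\<^sub>R (a * b)" by transfer (simp add: blinfun_eqI blinfun.bilinear_simps)
  show "a * r *\<^sub>R b = r *\<^sub>R (a * b)" by transfer (simp add: blinfun_eqI blinfun.bilinear_simps)
  show "1 * a = a" by transfer (simp add: blinfun_eqI)
  show "a * 1 = a" by transfer (simp add: blinfun_eqI)
  show "(0::'a endo) \<noteq> 1" by transfer (metis norm_blinfun_id norm_zero zero_neq_one)
  show "norm (1::'a endo) = 1" by transfer simp
  show "norm (a * b) \<le> norm a * norm b" by transfer (rule norm_blinfun_compose)
  show "norm a = 0 \<longleftrightarrow> a = 0" by transfer simp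
  show "norm (a + b) \<le> norm a + norm b" by transfer (rule norm_triangle_ineq)
  show "norm (r *\<^sub>R a) = \<bar>r\<bar> * norm a" by transfer simp
qed (simp_all add: dist_endo_def sgn_endo_def uniformity_endo_def open_endo_def)

end

instance endo :: (euclidean_space) banach
proof
  fix X :: "nat \<Rightarrow> 'a endo"
  assume "Cauchy X"
  have dist_rep: "dist a b = dist (Rep_endo a) (Rep_endo b)" for a b :: "'a endo"
    by (simp add: dist_endo_def dist_norm norm_endo.rep_eq minus_endo.rep_eq)
  have "Cauchy (\<lambda>n. Rep_endo (X n))"
    using \<open>Cauchy X\<close> by (simp add: Cauchy_def dist_rep)
  then obtain l where "(\<lambda>n. Rep_endo (X n)) \<longlonglongrightarrow> l"
    using Cauchy_convergent convergent_def by blast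
  then have "X \<longlonglongrightarrow> Abs_endo l"
    by (simp add: lim_sequentially dist_rep Abs_endo_inverse)
  then show "convergent X" by (auto simp: convergent_def)
qed

lift_definition endo_apply :: "'a::euclidean_space endo \<Rightarrow> 'a \<Rightarrow> 'a" is blinfun_apply .

lift_definition endo_of :: "('a \<Rightarrow> 'a) \<Rightarrow> 'a::euclidean_space endo" is Blinfun .

lemma bounded_bilinear_endo_apply: "bounded_bilinear endo_apply"
proof
  fix a b :: "'a::euclidean_space endo" and x y :: 'a and r :: real
  show "endo_apply (a + b) x = endo_apply a x + endo_apply b x"
    by transfer (simp add: blinfun.add_left)
  show "endo_apply a (x + y) = endo_apply a x + endo_apply a y"
    by transfer (simp add: blinfun.add_right)
  show "endo_apply (r *\<^sub>R a) x = r *\<^sub>R endo_apply a x"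
    by transfer (simp add: blinfun.scaleR_left)
  show "endo_apply a (r *\<^sub>R x) = r *\<^sub>R endo_apply a x"
    by transfer (simp add: blinfun.scaleR_right)
  show "\<exists>K. \<forall>a x. norm (endo_apply a x) \<le> norm a * norm x * K"
    by (rule exI[of _ 1], transfer) (simp add: norm_blinfun)
qed

interpretation endo_apply: bounded_bilinear endo_apply
  by (rule bounded_bilinear_endo_apply)

lemma endo_apply_endo_of: "linear L \<Longrightarrow> endo_apply (endo_of L) = L"
  by transfer (simp add: bounded_linear_Blinfun_apply linear_conv_bounded_linear fun_eq_iff)

lemma endo_apply_one [simp]: "endo_apply 1 v = v"
  by transfer simp

lemma endo_apply_times: "endo_apply (a * b) v = endo_apply a (endo_apply b v)"
  by transfer simp

lemma endo_apply_power: "endo_apply (a ^ m) v = (endo_apply a ^^ m) v"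
  by (induction m arbitrary: v) (simp_all add: endo_apply_times)

lemma endo_apply_exp_sums:
  assumes "linear L"
  shows "(\<lambda>m. (1 / fact m) *\<^sub>R (L ^^ m) v) sums endo_apply (exp (endo_of L)) v"
proof -
  have "(\<lambda>m. endo_apply (endo_of L ^ m /\<^sub>R fact m) v) sums endo_apply (exp (endo_of L)) v"
    unfolding exp_def
    by (rule bounded_linear.sums[OF endo_apply.bounded_linear_left summable_sums[OF summable_exp_generic]])
  then show ?thesis
    by (simp add: endo_apply.scaleR_left endo_apply_power endo_apply_endo_of[OF assms] divide_inverse)
qed

lemma op_exp_sums:
  fixes L :: "'a::euclidean_space \<Rightarrow> 'a"
  assumes "linear L"
  shows "(\<lambda>m. (1 / fact m) *\<^sub>R (L ^^ m) v) sums op_exp L v"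
  unfolding op_exp_def by (rule summable_sums, rule sums_summable, rule endo_apply_exp_sums[OF assms])

lemma endo_of_scaleR: "linear L \<Longrightarrow> endo_of (\<lambda>v. s *\<^sub>R L v) = s *\<^sub>R endo_of L"
  by transfer (auto intro!: blinfun_eqI simp: linear_conv_bounded_linear
      bounded_linear_Blinfun_apply bounded_linear_compose[OF bounded_linear_scaleR_right]
      blinfun.scaleR_left)

lemma op_exp_scaled:
  fixes L :: "'a::euclidean_space \<Rightarrow> 'a"
  assumes "linear L"
  shows "op_exp (\<lambda>v. s *\<^sub>R L v) = endo_apply (exp (s *\<^sub>R endo_of L))"
proof -
  have "linear (\<lambda>v. s *\<^sub>R L v)"
    using assms by (simp add: linear_compose_scale_right)
  then have "op_exp (\<lambda>v. s *\<^sub>R L v) x = endo_apply (exp (endo_of (\<lambda>v. s *\<^sub>R L v))) x" for x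
    using endo_apply_exp_sums op_exp_sums sums_unique2 by blast
  then show ?thesis
    by (simp add: fun_eq_iff endo_of_scaleR[OF assms])
qed

lemma linear_op_exp:
  fixes L :: "'a::euclidean_space \<Rightarrow> 'a"
  shows "linear L \<Longrightarrow> linear (op_exp (\<lambda>v. s *\<^sub>R L v))"
  by (simp add: op_exp_scaled endo_apply.bounded_linear_right bounded_linear.linear)

lemma op_exp_inverse:
  fixes L :: "'a::euclidean_space \<Rightarrow> 'a"
  assumes "linear L"
  shows "op_exp (\<lambda>v. s *\<^sub>R L v) (op_exp (\<lambda>v. - (s *\<^sub>R L v)) x) = x"
    and "op_exp (\<lambda>v. - (s *\<^sub>R L v)) (op_exp (\<lambda>v. s *\<^sub>R L v) x) = x"
  using exp_minus_inverse[of "s *\<^sub>R endo_of L"] exp_minus_inverse[of "- (s *\<^sub>R endo_of L)"]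
    op_exp_scaled[OF assms, of s] op_exp_scaled[OF assms, of "- s"]
  by (simp_all flip: endo_apply_times)

lemma op_exp_intertwine:
  fixes L :: "'a::euclidean_space \<Rightarrow> 'a" and M :: "'b::euclidean_space \<Rightarrow> 'b"
  assumes L: "linear L" and M: "linear M" and T: "bounded_linear T"
    and LM: "\<And>v. T (L v) = M (T v)"
  shows "T (op_exp (\<lambda>v. s *\<^sub>R L v) x) = op_exp (\<lambda>v. s *\<^sub>R M v) (T x)"
proof -
  have sL: "linear (\<lambda>v. s *\<^sub>R L v)" and sM: "linear (\<lambda>v. s *\<^sub>R M v)"
    using L M by (simp_all add: linear_compose_scale_right)
  have Tlin: "linear T" using T by (rule bounded_linear.linear)
  have power: "T (((\<lambda>v. s *\<^sub>R L v) ^^ m) x) = ((\<lambda>v. s *\<^sub>R M v) ^^ m) (T x)" for m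
    by (induction m) (simp_all add: linear_scale[OF Tlin] LM)
  have "(\<lambda>m. T ((1 / fact m) *\<^sub>R ((\<lambda>v. s *\<^sub>R L v) ^^ m) x))
      sums T (op_exp (\<lambda>v. s *\<^sub>R L v) x)"
    by (rule bounded_linear.sums[OF T op_exp_sums[OF sL]])
  then have "(\<lambda>m. (1 / fact m) *\<^sub>R ((\<lambda>v. s *\<^sub>R M v) ^^ m) (T x))
      sums T (op_exp (\<lambda>v. s *\<^sub>R L v) x)"
    by (simp add: linear_scale[OF Tlin] power)
  then show ?thesis
    using op_exp_sums[OF sM] sums_unique2 by blast
qed

lemma op_exp_zero [simp]: "op_exp (\<lambda>v. 0) x = (x::'a::euclidean_space)"
proof -
  have "(1 / fact m) *\<^sub>R ((\<lambda>v. 0::'a) ^^ m) x = (if m = 0 then x else 0)" for m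
    by (cases m) simp_all
  then have "(\<lambda>m. (1 / fact m) *\<^sub>R ((\<lambda>v. 0::'a) ^^ m) x) sums x"
    using sums_single[of 0 "\<lambda>_. x"] by presburger
  then show ?thesis
    using op_exp_sums[OF linear_zero] sums_unique2 by blast
qed

lemma op_exp_annihilated:
  fixes L :: "'a::euclidean_space \<Rightarrow> 'a" and T :: "'a \<Rightarrow> 'b::euclidean_space"
  assumes "linear L" "bounded_linear T" "\<And>v. T (L v) = 0"
  shows "T (op_exp (\<lambda>v. s *\<^sub>R L v) x) = T x"
proof -
  have "T (op_exp (\<lambda>v. s *\<^sub>R L v) x) = op_exp (\<lambda>v. s *\<^sub>R (\<lambda>_::'b. 0) v) (T x)"
    using assms by (intro op_exp_intertwine) (simp_all add: linear_zero)
  then show ?thesis by simp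
qed

lemma op_exp_commute:
  fixes L :: "'a::euclidean_space \<Rightarrow> 'a"
  assumes "linear L"
  shows "L (op_exp (\<lambda>v. s *\<^sub>R L v) x) = op_exp (\<lambda>v. s *\<^sub>R L v) (L x)"
  using assms by (intro op_exp_intertwine) (simp_all add: linear_conv_bounded_linear)

lemma has_vector_derivative_op_exp:
  fixes L :: "'a::euclidean_space \<Rightarrow> 'a"
  assumes "linear L" and "(u has_vector_derivative u') (at t within S)"
  shows "((\<lambda>s. op_exp (\<lambda>v. s *\<^sub>R L v) (u s)) has_vector_derivative
           op_exp (\<lambda>v. t *\<^sub>R L v) (L (u t) + u')) (at t within S)"
proof -
  let ?A = "endo_of L"
  have "((\<lambda>s. endo_apply (exp (s *\<^sub>R ?A)) (u s)) has_vector_derivative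
         endo_apply (exp (t *\<^sub>R ?A)) u' + endo_apply (exp (t *\<^sub>R ?A) * ?A) (u t)) (at t within S)"
    by (rule endo_apply.has_vector_derivative[OF exp_scaleR_has_vector_derivative_right assms(2)])
  then show ?thesis
    by (simp add: op_exp_scaled[OF assms(1)] endo_apply_times endo_apply_endo_of[OF assms(1)]
        endo_apply.add_right add.commute)
qed

lemma continuous_on_op_exp:
  fixes L :: "'a::euclidean_space \<Rightarrow> 'a"
  assumes "linear L"
  shows "continuous_on S (\<lambda>s. op_exp (\<lambda>v. s *\<^sub>R L v) x)"
  using has_vector_derivative_op_exp[OF assms has_vector_derivative_const]
  by (meson continuous_at_imp_continuous_on has_vector_derivative_continuous)

lemma op_exp_inner:
  fixes L :: "'a::euclidean_space \<Rightarrow> 'a"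
  assumes L: "linear L" and skew: "\<And>a b. L a \<bullet> b = - (a \<bullet> L b)"
  shows "op_exp (\<lambda>v. s *\<^sub>R L v) a \<bullet> op_exp (\<lambda>v. s *\<^sub>R L v) b = a \<bullet> b"
proof -
  let ?E = "\<lambda>s x. op_exp (\<lambda>v. s *\<^sub>R L v) x"
  have "((\<lambda>s. ?E s a \<bullet> ?E s b) has_real_derivative 0) (at t)" for t
  proof -
    have "((\<lambda>s. ?E s a \<bullet> ?E s b) has_vector_derivative
         ?E t a \<bullet> ?E t (L b) + ?E t (L a) \<bullet> ?E t b) (at t)"
      using has_vector_derivative_op_exp[OF L has_vector_derivative_const]
      by (intro bounded_bilinear.has_vector_derivative[OF bounded_bilinear_inner]) auto
    also have "?E t a \<bullet> ?E t (L b) + ?E t (L a) \<bullet> ?E t b = 0"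
      by (simp add: op_exp_commute[OF L, symmetric] skew)
    finally show ?thesis
      by (simp add: has_real_derivative_iff_has_vector_derivative)
  qed
  then show ?thesis
    using DERIV_isconst_all[of "\<lambda>s. ?E s a \<bullet> ?E s b" s 0] by simp
qed

lemma has_vector_derivative_op_exp_iff:
  fixes L :: "'a::euclidean_space \<Rightarrow> 'a"
  assumes L: "linear L"
  shows "((\<lambda>s. op_exp (\<lambda>v. s *\<^sub>R L v) (Z s)) has_vector_derivative
            op_exp (\<lambda>v. t *\<^sub>R L v) (L (Z t) + D)) (at t within S) \<longleftrightarrow>
         (Z has_vector_derivative D) (at t within S)"
proof
  let ?E = "\<lambda>s. op_exp (\<lambda>v. s *\<^sub>R L v)"
  have L': "linear (\<lambda>v. - L v)"
    using L by (simp add: linear_compose_neg)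
  assume "((\<lambda>s. ?E s (Z s)) has_vector_derivative ?E t (L (Z t) + D)) (at t within S)"
  from has_vector_derivative_op_exp[OF L' this]
  have "((\<lambda>s. ?E (- s) (?E s (Z s))) has_vector_derivative
      ?E (- t) (- L (?E t (Z t)) + ?E t (L (Z t) + D))) (at t within S)"
    by simp
  moreover have "?E (- s) (?E s v) = v" for s v
    by (simp add: op_exp_inverse[OF L])
  moreover have "- L (?E t (Z t)) + ?E t (L (Z t) + D) = ?E t D"
    by (simp add: op_exp_commute[OF L] linear_add[OF linear_op_exp[OF L]])
  ultimately show "(Z has_vector_derivative D) (at t within S)"
    by simp
qed (rule has_vector_derivative_op_exp[OF L])

lemma matrix_add_rdistrib: "((A::real^'m^'n) + B) ** C = A ** C + B ** C"
  by (vector matrix_matrix_mult_def sum.distrib[symmetric] field_simps)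

lemma matrix_diff_ldistrib: "(A::real^'m^'n) ** (B - C) = A ** B - A ** C"
  by (vector matrix_matrix_mult_def sum_subtractf[symmetric] field_simps)

lemma matrix_diff_rdistrib: "((A::real^'m^'n) - B) ** C = A ** C - B ** C"
  by (vector matrix_matrix_mult_def sum_subtractf[symmetric] field_simps)

lemma matrix_mult_uminus_left: "(- (A::real^'m^'n)) ** B = - (A ** B)"
  by (vector matrix_matrix_mult_def sum_negf[symmetric])

lemma matrix_mult_uminus_right: "(A::real^'m^'n) ** (- B) = - (A ** B)"
  by (vector matrix_matrix_mult_def sum_negf[symmetric])

lemma matrix_mult_scaleR_left: "(r *\<^sub>R (A::real^'m^'n)) ** B = r *\<^sub>R (A ** B)"
  by (simp add: scalar_matrix_assoc)

lemma matrix_mult_scaleR_right: "(A::real^'m^'n) ** (r *\<^sub>R B) = r *\<^sub>R (A ** B)"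
  by (simp add: matrix_scalar_ac scalar_matrix_assoc)

lemma transpose_add: "transpose ((A::real^'m^'n) + B) = transpose A + transpose B"
  by (simp add: transpose_def vec_eq_iff)

lemma transpose_diff: "transpose ((A::real^'m^'n) - B) = transpose A - transpose B"
  by (simp add: transpose_def vec_eq_iff)

lemma transpose_uminus: "transpose (- (A::real^'m^'n)) = - transpose A"
  by (simp add: transpose_def vec_eq_iff)

lemma transpose_zero: "transpose (0::real^'m^'n) = 0"
  by (simp add: transpose_def vec_eq_iff)

lemmas matrix_algebra_simps = matrix_add_ldistrib matrix_add_rdistrib
  matrix_diff_ldistrib matrix_diff_rdistrib matrix_mult_uminus_left matrix_mult_uminus_right
  matrix_mult_scaleR_left matrix_mult_scaleR_right transpose_add transpose_diff transpose_uminus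
  transpose_zero matrix_transpose_mul transpose_scalar transpose_transpose

lemma bounded_linear_matrix_mult_left: "bounded_linear (\<lambda>M. (A::real^'m^'n) ** (M::real^'p^'m))"
  by (simp add: linear_conv_bounded_linear[symmetric] linear_iff matrix_add_ldistrib
      matrix_mult_scaleR_right)

lemma bounded_linear_matrix_mult_right: "bounded_linear (\<lambda>M. (M::real^'m^'n) ** (A::real^'p^'m))"
  by (simp add: linear_conv_bounded_linear[symmetric] linear_iff matrix_add_rdistrib
      matrix_mult_scaleR_left)

lemma bounded_bilinear_matrix_mult: "bounded_bilinear (\<lambda>(A::real^'m^'n) (B::real^'p^'m). A ** B)"
  by (simp add: bilinear_conv_bounded_bilinear[symmetric] bilinear_def
      bounded_linear_matrix_mult_left bounded_linear_matrix_mult_right bounded_linear.linear)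

lemma bounded_linear_transpose: "bounded_linear (\<lambda>M. transpose (M::real^'m^'n))"
  by (simp add: linear_conv_bounded_linear[symmetric] linear_iff transpose_add transpose_scalar)

lemma inner_matrix: "(A::real^'m^'n) \<bullet> B = (\<Sum>i\<in>UNIV. \<Sum>j\<in>UNIV. A$i$j * B$i$j)"
  by (simp add: inner_vec_def)

lemma trace_transpose_mult: "trace (transpose (V::real^'m^'n) ** W) = V \<bullet> W"
  by (simp add: trace_def inner_matrix matrix_matrix_mult_def transpose_def) (rule sum.swap)

lemma euclid_metric_eq_inner: "euclid_metric V W = 2 * (V \<bullet> W)"
  by (simp add: euclid_metric_def trace_transpose_mult)

lemma inner_matrix_mult_left: "((A::real^'m^'n) ** B) \<bullet> C = B \<bullet> (transpose A ** C)"
proof -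
  have "(A ** B) \<bullet> C = (\<Sum>i\<in>UNIV. \<Sum>j\<in>UNIV. \<Sum>l\<in>UNIV. A$i$l * B$l$j * C$i$j)"
    by (simp add: inner_matrix matrix_matrix_mult_def sum_distrib_right)
  also have "\<dots> = (\<Sum>l\<in>UNIV. \<Sum>j\<in>UNIV. \<Sum>i\<in>UNIV. A$i$l * B$l$j * C$i$j)"
    by (subst sum.swap, subst (1 2) sum.swap, rule refl)
  also have "\<dots> = B \<bullet> (transpose A ** C)"
    by (simp add: inner_matrix matrix_matrix_mult_def transpose_def sum_distrib_left mult_ac)
  finally show ?thesis .
qed

lemma inner_matrix_mult_right: "((A::real^'m^'n) ** B) \<bullet> C = A \<bullet> (C ** transpose B)"
proof -
  have "(A ** B) \<bullet> C = (\<Sum>i\<in>UNIV. \<Sum>j\<in>UNIV. \<Sum>l\<in>UNIV. A$i$l * B$l$j * C$i$j)"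
    by (simp add: inner_matrix matrix_matrix_mult_def sum_distrib_right)
  also have "\<dots> = (\<Sum>i\<in>UNIV. \<Sum>l\<in>UNIV. \<Sum>j\<in>UNIV. A$i$l * B$l$j * C$i$j)"
    by (rule sum.cong[OF refl], rule sum.swap)
  also have "\<dots> = A \<bullet> (C ** transpose B)"
    by (simp add: inner_matrix matrix_matrix_mult_def transpose_def sum_distrib_left mult_ac)
  finally show ?thesis .
qed

lemma inner_transpose: "transpose (A::real^'m^'n) \<bullet> transpose B = A \<bullet> B"
  by (simp add: inner_matrix transpose_def) (rule sum.swap)

lemma matrix_inv_unique:
  fixes A B :: "real^'m^'m"
  assumes "A ** B = mat 1" "B ** A = mat 1"
  shows "matrix_inv A = B"
  unfolding matrix_inv_def
proof (rule some_equality)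
  fix B' assume B': "A ** B' = mat 1 \<and> B' ** A = mat 1"
  have "B' = B' ** (A ** B)" by (simp add: assms)
  also have "\<dots> = B" by (simp add: matrix_mul_assoc B')
  finally show "B' = B" .
qed (use assms in simp)

lemma matrix_inv_orthogonal: "orthogonal_matrix (Q::real^'m^'m) \<Longrightarrow> matrix_inv Q = transpose Q"
  by (rule matrix_inv_unique) (simp_all add: orthogonal_matrix_def)

lemma orthogonal_matrix_cancel:
  fixes Q :: "real^'m^'m"
  assumes "orthogonal_matrix Q"
  shows "transpose Q ** (Q ** M) = M" "Q ** (transpose Q ** M) = M"
    "N ** transpose Q ** Q = N" "N ** Q ** transpose Q = N"
  using assms unfolding orthogonal_matrix_def
  by (simp_all add: matrix_mul_assoc) (simp_all flip: matrix_mul_assoc)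

lemma linear_matrix_mult_left: "linear (\<lambda>M. (A::real^'m^'n) ** (M::real^'p^'m))"
  by (rule bounded_linear.linear[OF bounded_linear_matrix_mult_left])

lemma mexp_eq_op_exp: "mexp (s *\<^sub>R A) = op_exp (\<lambda>M. s *\<^sub>R (A ** M)) (mat 1)"
  by (simp add: mexp_def op_exp_def matrix_mult_scaleR_left)

lemma mexp_mult_eq_op_exp:
  "mexp (s *\<^sub>R A) ** (M::real^'p^'m) = op_exp (\<lambda>N. s *\<^sub>R (A ** N)) M"
proof -
  have "(\<lambda>N. N ** M) (op_exp (\<lambda>N. s *\<^sub>R (A ** N)) (mat 1)) =
      op_exp (\<lambda>N. s *\<^sub>R (A ** N)) (mat 1 ** M)"
    by (rule op_exp_intertwine)
      (simp_all add: linear_matrix_mult_left bounded_linear_matrix_mult_right matrix_mul_assoc)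
  then show ?thesis by (simp add: mexp_eq_op_exp)
qed

lemma mexp_inverse: "mexp (s *\<^sub>R A) ** mexp ((- s) *\<^sub>R A) = mat 1"
proof -
  have "mexp (s *\<^sub>R A) ** mexp ((- s) *\<^sub>R A) =
      op_exp (\<lambda>N. s *\<^sub>R (A ** N)) (op_exp (\<lambda>N. (- s) *\<^sub>R (A ** N)) (mat 1))"
    by (subst mexp_mult_eq_op_exp) (simp only: mexp_eq_op_exp)
  also have "\<dots> = mat 1"
    by (simp add: op_exp_inverse[OF linear_matrix_mult_left])
  finally show ?thesis .
qed

lemma has_vector_derivative_mexp:
  "((\<lambda>s. mexp (s *\<^sub>R A)) has_vector_derivative mexp (t *\<^sub>R A) ** A) (at t within S)"
proof -
  have "((\<lambda>s. op_exp (\<lambda>M. s *\<^sub>R (A ** M)) (mat 1)) has_vector_derivative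
      op_exp (\<lambda>M. t *\<^sub>R (A ** M)) (A ** mat 1 + 0)) (at t within S)"
    by (rule has_vector_derivative_op_exp[OF linear_matrix_mult_left has_vector_derivative_const])
  then show ?thesis
    by (subst mexp_mult_eq_op_exp) (simp add: mexp_eq_op_exp)
qed

lemma mexp_intertwine:
  fixes A :: "real^'n^'n" and B :: "real^'k^'k" and X :: "real^'k^'n"
  assumes "A ** X = X ** B"
  shows "mexp (s *\<^sub>R A) ** X = X ** mexp (s *\<^sub>R B)"
proof -
  have "(\<lambda>N. X ** N) (op_exp (\<lambda>N. s *\<^sub>R (B ** N)) (mat 1)) =
      op_exp (\<lambda>N. s *\<^sub>R (A ** N)) (X ** mat 1)"
    by (rule op_exp_intertwine)
      (simp_all add: linear_matrix_mult_left bounded_linear_matrix_mult_left matrix_mul_assoc assms)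
  then show ?thesis by (simp add: mexp_eq_op_exp[of s B] mexp_mult_eq_op_exp)
qed

lemma mexp_commute: "mexp (s *\<^sub>R A) ** A = A ** mexp (s *\<^sub>R A)"
  by (rule mexp_intertwine) (rule refl)

lemma orthogonal_matrix_mexp:
  fixes A :: "real^'m^'m"
  assumes "skew A"
  shows "orthogonal_matrix (mexp (s *\<^sub>R A))"
proof -
  let ?E = "mexp (s *\<^sub>R A)"
  have "(A ** M) \<bullet> N = - (M \<bullet> (A ** N))" for M N :: "real^'m^'m"
    using assms by (simp add: inner_matrix_mult_left skew_def matrix_algebra_simps)
  then have isometry: "(?E ** M) \<bullet> (?E ** N) = M \<bullet> N" for M N :: "real^'m^'m"
    by (simp add: mexp_mult_eq_op_exp op_exp_inner linear_matrix_mult_left)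
  let ?D = "transpose ?E ** ?E - mat 1"
  have "?D \<bullet> (transpose ?E ** ?E) = (?E ** ?D) \<bullet> ?E"
    by (simp add: inner_matrix_mult_left)
  then have "?D \<bullet> ?D = 0"
    using isometry[of ?D "mat 1"] by (simp add: inner_diff_right)
  then show ?thesis
    by (simp add: orthogonal_matrix)
qed

lemma mexp_transpose:
  fixes A :: "real^'m^'m"
  assumes "skew A"
  shows "transpose (mexp (s *\<^sub>R A)) = mexp ((- s) *\<^sub>R A)"
proof -
  have "transpose (mexp (s *\<^sub>R A)) =
      transpose (mexp (s *\<^sub>R A)) ** (mexp (s *\<^sub>R A) ** mexp ((- s) *\<^sub>R A))"
    by (simp only: mexp_inverse matrix_mul_rid)
  also have "\<dots> = mexp ((- s) *\<^sub>R A)"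
    using orthogonal_matrix_mexp[OF assms, of s] by (simp add: orthogonal_matrix matrix_mul_assoc)
  finally show ?thesis .
qed

definition skew_pair :: "('n::finite,'k::finite) lalg \<Rightarrow> bool" where
  "skew_pair y \<longleftrightarrow> skew (fst y) \<and> skew (snd y)"

definition orthogonal_pair :: "('n::finite,'k::finite) lalg \<Rightarrow> bool" where
  "orthogonal_pair g \<longleftrightarrow> orthogonal_matrix (fst g) \<and> orthogonal_matrix (snd g)"

lemma orthogonal_pair_gexp: "skew_pair xi \<Longrightarrow> orthogonal_pair (gexp t xi)"
  by (simp add: skew_pair_def orthogonal_pair_def gexp_def orthogonal_matrix_mexp)

lemma linear_Phi: "linear (Phi g)"
  by (simp add: linear_iff Phi_def matrix_algebra_simps)

lemma Phi_Phi: "Phi g (Phi h V) = Phi (fst g ** fst h, snd g ** snd h) V"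
  by (simp add: Phi_def matrix_mul_assoc matrix_transpose_mul)

lemma Phi_gexp_inverse: "Phi (gexp (- t) xi) (Phi (gexp t xi) V) = V"
  unfolding Phi_Phi using mexp_inverse[of "- t" "fst xi"] mexp_inverse[of "- t" "snd xi"]
  by (simp add: gexp_def Phi_def)

lemma Phi_inner:
  assumes "orthogonal_pair g"
  shows "Phi g A \<bullet> Phi g B = A \<bullet> B"
proof -
  have "Phi g A \<bullet> Phi g B =
      (A ** transpose (snd g)) \<bullet> (transpose (fst g) ** (fst g ** (B ** transpose (snd g))))"
    by (simp add: Phi_def matrix_mul_assoc inner_matrix_mult_left flip: matrix_mul_assoc)
  also have "\<dots> = A \<bullet> (B ** transpose (snd g) ** snd g)"
    using assms by (simp add: orthogonal_pair_def orthogonal_matrix_cancel inner_matrix_mult_right)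
  finally show ?thesis
    using assms by (simp add: orthogonal_pair_def orthogonal_matrix_cancel)
qed

lemma transpose_Phi_mult_Phi:
  assumes "orthogonal_pair g"
  shows "transpose (Phi g A) ** Phi g B = snd g ** (transpose A ** B) ** transpose (snd g)"
  using assms by (simp add: orthogonal_pair_def Phi_def matrix_transpose_mul matrix_mul_assoc
      orthogonal_matrix_cancel)

lemma Phi_stiefel: "orthogonal_pair g \<Longrightarrow> X \<in> stiefel \<Longrightarrow> Phi g X \<in> stiefel"
  by (simp add: stiefel_def transpose_Phi_mult_Phi)
    (simp add: orthogonal_pair_def orthogonal_matrix_def)

lemma P_perp_Phi:
  assumes "orthogonal_pair g"
  shows "P_perp (Phi g X) (Phi g V) = Phi g (P_perp X V)"
proof -
  have "P_perp (Phi g X) (Phi g V) =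
      (1/2) *\<^sub>R (Phi g X ** (snd g ** (transpose X ** V + transpose V ** X) ** transpose (snd g)))"
    by (simp add: P_perp_def transpose_Phi_mult_Phi[OF assms] matrix_algebra_simps)
  also have "\<dots> = Phi g (P_perp X V)"
    using assms by (simp add: Phi_def P_perp_def orthogonal_pair_def matrix_algebra_simps
        matrix_mul_assoc orthogonal_matrix_cancel orthogonal_matrix_def)
  finally show ?thesis .
qed

lemma linear_f_xi: "linear (f_xi xi)"
  by (simp add: linear_iff f_xi_def matrix_algebra_simps algebra_simps)

lemma f_xi_skew:
  assumes "skew_pair xi"
  shows "f_xi xi a \<bullet> b = - (a \<bullet> f_xi xi b)"
proof -
  have "f_xi xi a \<bullet> b = a \<bullet> (transpose (fst xi) ** b) - a \<bullet> (b ** transpose (snd xi))"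
    by (simp only: f_xi_def inner_diff_left inner_matrix_mult_left[of "fst xi"]
        inner_matrix_mult_right[of a "snd xi"])
  then show ?thesis
    using assms by (simp add: skew_pair_def skew_def f_xi_def matrix_algebra_simps inner_diff_right)
qed

lemma has_vector_derivative_Phi_gexp:
  assumes xi: "skew_pair xi" and U: "(U has_vector_derivative U') (at t within T)"
  shows "((\<lambda>s. Phi (gexp s xi) (U s)) has_vector_derivative
           Phi (gexp t xi) (f_xi xi (U t) + U')) (at t within T)"
proof -
  let ?G1 = "\<lambda>s. mexp (s *\<^sub>R fst xi)" and ?G2 = "\<lambda>s. mexp (s *\<^sub>R snd xi)"
  have "((\<lambda>s. transpose (?G2 s)) has_vector_derivative transpose (?G2 t ** snd xi)) (at t within T)"
    by (rule bounded_linear.has_vector_derivative[OF bounded_linear_transpose has_vector_derivative_mexp])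
  moreover have "((\<lambda>s. ?G1 s ** U s) has_vector_derivative ?G1 t ** U' + (?G1 t ** fst xi) ** U t)
      (at t within T)"
    by (rule bounded_bilinear.has_vector_derivative[OF bounded_bilinear_matrix_mult has_vector_derivative_mexp U])
  ultimately have "((\<lambda>s. (?G1 s ** U s) ** transpose (?G2 s)) has_vector_derivative
      (?G1 t ** U t) ** transpose (?G2 t ** snd xi) + (?G1 t ** U' + (?G1 t ** fst xi) ** U t) ** transpose (?G2 t))
      (at t within T)"
    by (rule bounded_bilinear.has_vector_derivative[OF bounded_bilinear_matrix_mult, rotated])
  moreover have "transpose (snd xi) = - snd xi"
    using xi by (simp add: skew_pair_def skew_def)
  ultimately show ?thesis
    by (simp add: Phi_def gexp_def f_xi_def matrix_algebra_simps matrix_mul_assoc algebra_simps)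
qed

lemma Phi_gexp_f_xi:
  fixes xi :: "('n::finite,'k::finite) lalg"
  assumes "skew_pair xi"
  shows "Phi (gexp t xi) (f_xi xi V) = f_xi xi (Phi (gexp t xi) V)"
proof -
  let ?E1 = "mexp (t *\<^sub>R fst xi)" and ?E2 = "mexp ((- t) *\<^sub>R snd xi)"
  have "?E1 ** (fst xi ** N) = fst xi ** (?E1 ** N)" for N :: "real^'k^'n"
    by (simp add: matrix_mul_assoc mexp_commute)
  moreover have "snd xi ** ?E2 = ?E2 ** snd xi"
    by (simp only: mexp_commute)
  moreover have "transpose (mexp (t *\<^sub>R snd xi)) = ?E2"
    using assms by (simp add: skew_pair_def mexp_transpose)
  ultimately show ?thesis
    by (simp add: Phi_def gexp_def f_xi_def matrix_algebra_simps del: scaleR_minus_left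
        flip: matrix_mul_assoc)
qed

lemma has_vector_derivative_Phi_gexp_iff:
  assumes xi: "skew_pair xi"
  shows "((\<lambda>s. Phi (gexp s xi) (U s)) has_vector_derivative
            Phi (gexp t xi) (f_xi xi (U t) + D)) (at t within S) \<longleftrightarrow>
         (U has_vector_derivative D) (at t within S)"
proof
  assume "((\<lambda>s. Phi (gexp s xi) (U s)) has_vector_derivative
            Phi (gexp t xi) (f_xi xi (U t) + D)) (at t within S)"
  moreover have "skew_pair (- xi)"
    using xi by (simp add: skew_pair_def skew_def transpose_uminus)
  ultimately have "((\<lambda>s. Phi (gexp s (- xi)) (Phi (gexp s xi) (U s))) has_vector_derivative
      Phi (gexp t (- xi)) (f_xi (- xi) (Phi (gexp t xi) (U t)) + Phi (gexp t xi) (f_xi xi (U t) + D)))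
      (at t within S)"
    by (rule has_vector_derivative_Phi_gexp[rotated])
  moreover have "gexp s (- xi) = gexp (- s) xi" for s
    by (simp add: gexp_def)
  moreover have "f_xi (- xi) V = - f_xi xi V" for V
    by (simp add: f_xi_def matrix_algebra_simps)
  ultimately show "(U has_vector_derivative D) (at t within S)"
    by (simp add: Phi_gexp_inverse Phi_gexp_f_xi[OF xi] linear_add[OF linear_Phi])
qed (rule has_vector_derivative_Phi_gexp[OF xi])

definition P_tan :: "real^'k::finite^'n::finite \<Rightarrow> real^'k^'n \<Rightarrow> real^'k^'n" where
  "P_tan Y V = V - P_perp Y V"

lemma linear_P_perp: "linear (P_perp Y)"
  by (simp add: linear_iff P_perp_def matrix_algebra_simps algebra_simps)

lemma linear_P_tan: "linear (P_tan Y)"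
  unfolding P_tan_def[abs_def] by (intro linear_compose_sub linear_ident linear_P_perp)

lemma P_tan_Phi:
  assumes "orthogonal_pair g"
  shows "P_tan (Phi g Y) (Phi g V) = Phi g (P_tan Y V)"
  by (simp add: P_tan_def P_perp_Phi[OF assms] linear_diff[OF linear_Phi])

context
  fixes Y :: "real^'k::finite^'n::finite"
  assumes Y: "Y \<in> stiefel"
begin

lemma transpose_stiefel_self: "transpose Y ** Y = mat 1"
  using Y by (simp add: stiefel_def)

lemma transpose_stiefel_mult: "transpose Y ** (Y ** M) = M"
  by (simp add: matrix_mul_assoc transpose_stiefel_self)

lemma transpose_stiefel_mult_P_perp:
  "transpose Y ** P_perp Y V = (1/2) *\<^sub>R (transpose Y ** V + transpose V ** Y)"
  by (simp add: P_perp_def matrix_algebra_simps transpose_stiefel_mult)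

lemma P_perp_idem: "P_perp Y (P_perp Y V) = P_perp Y V"
proof -
  let ?S = "transpose Y ** V + transpose V ** Y"
  have "transpose (P_perp Y V) ** Y = transpose (transpose Y ** P_perp Y V)"
    by (simp add: matrix_transpose_mul)
  also have "\<dots> = (1/2) *\<^sub>R ?S"
    by (simp add: transpose_stiefel_mult_P_perp matrix_algebra_simps add.commute)
  finally have "P_perp Y (P_perp Y V) = (1/2) *\<^sub>R (Y ** ((1/2) *\<^sub>R ?S + (1/2) *\<^sub>R ?S))"
    by (simp add: P_perp_def[of Y "P_perp Y V"] transpose_stiefel_mult_P_perp)
  then show ?thesis
    by (simp add: P_perp_def flip: scaleR_add_left)
qed

lemma P_perp_self_adjoint: "P_perp Y a \<bullet> b = a \<bullet> P_perp Y b"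
proof -
  have swap: "(transpose a ** Y) \<bullet> (transpose Y ** b) = (transpose Y ** a) \<bullet> (transpose b ** Y)"
    for a b :: "real^'k^'n"
    using inner_transpose[of "transpose Y ** a" "transpose b ** Y"]
    by (simp only: matrix_transpose_mul transpose_transpose)
  have expand: "P_perp Y a \<bullet> b =
      (1/2) * ((transpose Y ** a) \<bullet> (transpose Y ** b) + (transpose Y ** a) \<bullet> (transpose b ** Y))" for a b
    unfolding P_perp_def inner_scaleR_left inner_matrix_mult_left[of Y]
    by (simp only: inner_add_left swap)
  show ?thesis
    using swap[of b a] by (simp add: expand inner_commute[of a] inner_commute[of "transpose Y ** a"])
qed

lemma stiefel_tangent_iff: "V \<in> stiefel_tangent Y \<longleftrightarrow> P_perp Y V = 0"
proof
  assume "P_perp Y V = 0"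
  then have "transpose Y ** P_perp Y V = 0" by simp
  then show "V \<in> stiefel_tangent Y"
    by (simp add: transpose_stiefel_mult_P_perp stiefel_tangent_def)
qed (simp add: stiefel_tangent_def P_perp_def)

lemma stiefel_normal_iff: "V \<in> stiefel_normal Y \<longleftrightarrow> P_perp Y V = V"
proof
  assume N: "V \<in> stiefel_normal Y"
  have "P_perp Y (V - P_perp Y V) = 0"
    by (simp add: linear_diff[OF linear_P_perp] P_perp_idem)
  then have "V \<bullet> (V - P_perp Y V) = 0"
    using N by (simp add: stiefel_normal_def trace_transpose_mult stiefel_tangent_iff)
  then have "(V - P_perp Y V) \<bullet> (V - P_perp Y V) = 0"
    by (simp add: inner_diff_left P_perp_self_adjoint
        P_perp_idem linear_diff[OF linear_P_perp] inner_diff_right)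
  then show "P_perp Y V = V" by simp
next
  assume "P_perp Y V = V"
  then show "V \<in> stiefel_normal Y"
    by (auto simp: stiefel_normal_def trace_transpose_mult stiefel_tangent_iff)
      (metis P_perp_self_adjoint inner_zero_right)
qed

lemma stiefel_tangent_eq: "stiefel_tangent Y = {V. P_tan Y V = V}"
  by (auto simp: P_tan_def stiefel_tangent_iff)

lemma stiefel_normal_eq: "stiefel_normal Y = {V. P_perp Y V = V}"
  by (auto simp: stiefel_normal_iff)

end

section \<open>Transporting vector fields along the orbit of \<open>X\<close>\<close>

lemma orth_proj_euclid_metric_eqI:
  assumes S: "\<And>a b. a \<in> S \<Longrightarrow> b \<in> S \<Longrightarrow> a - b \<in> S"
    and w: "w \<in> S" and orth: "\<And>u. u \<in> S \<Longrightarrow> (D - w) \<bullet> u = 0"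
  shows "orth_proj euclid_metric S D = w"
  unfolding orth_proj_def euclid_metric_eq_inner
proof (rule the_equality)
  fix w' assume w': "w' \<in> S \<and> (\<forall>u\<in>S. 2 * ((D - w') \<bullet> u) = 0)"
  then have "(D - w') \<bullet> (w - w') - (D - w) \<bullet> (w - w') = 0"
    using S w orth by simp
  then have "(w - w') \<bullet> (w - w') = 0"
    by (simp add: inner_diff_left algebra_simps)
  then show "w' = w" by simp
qed (use w orth in simp)

lemma lin_isometry_cong:
  assumes "subspace S" and "\<And>x. x \<in> S \<Longrightarrow> F x = F' x" and "lin_isometry g S S' F'"
  shows "lin_isometry g S S' F"
  using assms subspace_add[OF assms(1)] subspace_scale[OF assms(1)]
  by (auto simp: lin_isometry_def cong: image_cong)

lemma tangent_parallel_cong: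
  assumes "\<And>t. t \<in> I \<Longrightarrow> Z t = Z' t"
  shows "tangent_parallel g I TM c Z = tangent_parallel g I TM c Z'"
proof -
  have "(Z has_vector_derivative D) (at t within I) \<longleftrightarrow> (Z' has_vector_derivative D) (at t within I)"
    if "t \<in> I" for t D
    using has_vector_derivative_transform[OF that, of Z' Z] has_vector_derivative_transform[OF that, of Z Z']
      assms that by metis
  then show ?thesis
    using assms by (auto simp: tangent_parallel_def)
qed

lemma normal_parallel_eq_tangent_parallel: "normal_parallel = tangent_parallel"
  by (simp add: fun_eq_iff normal_parallel_def tangent_parallel_def)

lemma has_vector_derivative_in_kernel:
  assumes T: "bounded_linear T" and t: "t \<in> I" and nontrivial: "at t within I \<noteq> bot"
    and Z: "\<And>s. s \<in> I \<Longrightarrow> T (Z s) = 0"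
    and D: "(Z has_vector_derivative D) (at t within I)"
  shows "T D = 0"
proof -
  have "((\<lambda>s. T (Z s)) has_vector_derivative T D) (at t within I)"
    by (rule bounded_linear.has_vector_derivative[OF T D])
  moreover have "((\<lambda>s. T (Z s)) has_vector_derivative 0) (at t within I)"
    by (rule has_vector_derivative_transform[OF t _ has_vector_derivative_const]) (simp add: Z)
  ultimately show ?thesis
    using vector_derivative_unique_within[OF nontrivial] by blast
qed

lemma has_vector_derivative_at_within_bot:
  "at t within I = bot \<Longrightarrow> (f has_vector_derivative D) (at t within I)"
  by (simp add: has_vector_derivative_def has_derivative_def bounded_linear_scaleR_left)

locale equivariant_projections =
  fixes pr :: "real^'k::finite^'n::finite \<Rightarrow> real^'k^'n \<Rightarrow> real^'k^'n"
    and S :: "real^'k^'n \<Rightarrow> (real^'k^'n) set"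
  assumes linear_pr: "linear (pr Y)"
    and pr_idem: "Y \<in> stiefel \<Longrightarrow> pr Y (pr Y V) = pr Y V"
    and pr_self_adjoint: "Y \<in> stiefel \<Longrightarrow> pr Y a \<bullet> b = a \<bullet> pr Y b"
    and pr_Phi: "orthogonal_pair g \<Longrightarrow> pr (Phi g Y) (Phi g V) = Phi g (pr Y V)"
    and S_eq: "Y \<in> stiefel \<Longrightarrow> S Y = {V. pr Y V = V}"
begin

lemma pr_in_S: "Y \<in> stiefel \<Longrightarrow> pr Y V \<in> S Y"
  by (simp add: S_eq pr_idem)

lemma subspace_S: "Y \<in> stiefel \<Longrightarrow> subspace (S Y)"
  by (simp add: S_eq subspace_def linear_add[OF linear_pr] linear_scale[OF linear_pr] linear_0[OF linear_pr])

lemma orth_proj_S: "Y \<in> stiefel \<Longrightarrow> orth_proj euclid_metric (S Y) D = pr Y D"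
proof (rule orth_proj_euclid_metric_eqI)
  fix u assume "Y \<in> stiefel" "u \<in> S Y"
  then have "(D - pr Y D) \<bullet> u = pr Y (D - pr Y D) \<bullet> u"
    by (simp add: S_eq pr_self_adjoint)
  then show "(D - pr Y D) \<bullet> u = 0"
    using \<open>Y \<in> stiefel\<close> by (simp add: linear_diff[OF linear_pr] pr_idem)
qed (auto simp: S_eq linear_diff[OF linear_pr] pr_idem)

lemma tangent_parallel_iff:
  assumes "\<And>t. t \<in> I \<Longrightarrow> Y t \<in> stiefel \<and> TM (c t) = S (Y t)"
  shows "tangent_parallel euclid_metric I TM c W \<longleftrightarrow>
    (\<forall>t\<in>I. W t \<in> S (Y t)) \<and>
    (\<forall>t\<in>I. \<exists>D. (W has_vector_derivative D) (at t within I) \<and> pr (Y t) D = 0)"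
  using assms by (auto simp: tangent_parallel_def orth_proj_S)

definition compression :: "real^'k^'n \<Rightarrow> ('n,'k) lalg \<Rightarrow> real^'k^'n \<Rightarrow> real^'k^'n" where
  "compression X xi V = pr X (f_xi xi (pr X V))"

text \<open>\<open>B(t)\<close> is this map on tangent vectors, \<open>C(t)\<close> on normal vectors.\<close>

definition transport :: "real^'k^'n \<Rightarrow> ('n,'k) lalg \<Rightarrow> real \<Rightarrow> real^'k^'n \<Rightarrow> real^'k^'n" where
  "transport X xi t V = Phi (gexp t xi) (op_exp (\<lambda>V. (- t) *\<^sub>R compression X xi V) V)"

lemma bounded_linear_id_minus_pr: "bounded_linear (\<lambda>V. V - pr Y V)"
  by (simp add: linear_conv_bounded_linear[symmetric] linear_compose_sub linear_ident linear_pr)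

lemma linear_compression: "linear (compression X xi)"
  unfolding compression_def[abs_def]
  by (intro linear_compose[OF linear_compose[OF linear_pr linear_f_xi] linear_pr, unfolded o_def])

context
  fixes X :: "real^'k^'n" and xi :: "('n,'k) lalg"
  assumes X: "X \<in> stiefel" and xi: "skew_pair xi"
begin

lemma compression_skew: "compression X xi a \<bullet> b = - (a \<bullet> compression X xi b)"
  by (simp add: compression_def pr_self_adjoint[OF X] f_xi_skew[OF xi])

lemma pr_compression: "pr X (compression X xi V) = compression X xi V"
  by (simp add: compression_def pr_idem[OF X])

lemma op_exp_compression_in_S:
  assumes "V \<in> S X"
  shows "op_exp (\<lambda>V. s *\<^sub>R compression X xi V) V \<in> S X"
proof -
  have "op_exp (\<lambda>V. s *\<^sub>R compression X xi V) V - pr X (op_exp (\<lambda>V. s *\<^sub>R compression X xi V) V)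
      = V - pr X V"
    by (rule op_exp_annihilated[OF linear_compression bounded_linear_id_minus_pr])
      (simp add: pr_compression)
  then show ?thesis
    using assms by (simp add: S_eq[OF X])
qed

lemma transport_in_S:
  assumes "V \<in> S X"
  shows "transport X xi t V \<in> S (Phi (gexp t xi) X)"
proof -
  have og: "orthogonal_pair (gexp t xi)"
    by (rule orthogonal_pair_gexp[OF xi])
  show ?thesis
    using op_exp_compression_in_S[OF assms, of "- t"]
    by (simp add: transport_def S_eq[OF X] S_eq[OF Phi_stiefel[OF og X]] pr_Phi[OF og])
qed

lemma transport_lin_isometry:
  "lin_isometry euclid_metric (S X) (S (Phi (gexp t xi) X)) (transport X xi t)"
proof -
  let ?E = "\<lambda>s. op_exp (\<lambda>V. s *\<^sub>R compression X xi V)"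
  have og: "orthogonal_pair (gexp s xi)" for s
    by (rule orthogonal_pair_gexp[OF xi])
  have Yt: "Phi (gexp t xi) X \<in> stiefel"
    by (rule Phi_stiefel[OF og X])
  have linear: "linear (transport X xi t)"
    unfolding transport_def[abs_def]
    by (intro linear_compose[OF linear_op_exp[OF linear_compression] linear_Phi, unfolded o_def])
  have onto: "W \<in> transport X xi t ` S X" if W: "W \<in> S (Phi (gexp t xi) X)" for W
  proof -
    define V where "V = Phi (gexp (- t) xi) W"
    have "pr X V = Phi (gexp (- t) xi) (pr (Phi (gexp t xi) X) W)"
      using pr_Phi[OF og, of "- t" "Phi (gexp t xi) X" W] by (simp add: V_def Phi_gexp_inverse)
    then have "V \<in> S X"
      using W by (simp add: S_eq[OF X] S_eq[OF Yt] V_def)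
    then have "?E t V \<in> S X"
      by (rule op_exp_compression_in_S)
    moreover have "transport X xi t (?E t V) = W"
      using Phi_gexp_inverse[of "- t" xi W]
      by (simp add: transport_def V_def op_exp_inverse[OF linear_compression])
    ultimately show ?thesis by (metis image_eqI)
  qed
  have "euclid_metric (transport X xi t V) (transport X xi t V') = euclid_metric V V'" for V V'
    using op_exp_inner[OF linear_compression compression_skew, of "- t"]
    by (simp add: transport_def euclid_metric_eq_inner Phi_inner[OF og])
  then show ?thesis
    using linear transport_in_S onto
    by (auto simp: lin_isometry_def linear_add linear_scale)
qed

lemma parallel_in_fixed_frame_iff:
  assumes U: "\<And>s. s \<in> I \<Longrightarrow> U s \<in> S X" and t: "t \<in> I" and nontrivial: "at t within I \<noteq> bot"
  shows "(\<exists>D. ((\<lambda>s. op_exp (\<lambda>V. s *\<^sub>R compression X xi V) (U s)) has_vector_derivative D)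
              (at t within I) \<and> pr X D = 0) \<longleftrightarrow>
         (U has_vector_derivative - compression X xi (U t)) (at t within I)"
proof -
  let ?Z = "\<lambda>s. op_exp (\<lambda>V. s *\<^sub>R compression X xi V) (U s)"
  have Z_iff: "(?Z has_vector_derivative 0) (at t within I) \<longleftrightarrow>
      (U has_vector_derivative - compression X xi (U t)) (at t within I)"
    using has_vector_derivative_op_exp_iff[OF linear_compression[of X xi],
        where Z=U and t=t and D="- compression X xi (U t)" and S=I]
    by (simp add: linear_0[OF linear_op_exp[OF linear_compression]])
  have D0: "D = 0" if D: "(?Z has_vector_derivative D) (at t within I)" and "pr X D = 0" for D
  proof -
    have "D - pr X D = 0"
      by (rule has_vector_derivative_in_kernel[OF bounded_linear_id_minus_pr t nontrivial _ D])
        (use op_exp_compression_in_S[OF U] in \<open>simp add: S_eq[OF X]\<close>)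
    then show ?thesis
      using \<open>pr X D = 0\<close> by simp
  qed
  show ?thesis
  proof
    assume "\<exists>D. (?Z has_vector_derivative D) (at t within I) \<and> pr X D = 0"
    then show "(U has_vector_derivative - compression X xi (U t)) (at t within I)"
      using D0 Z_iff by blast
  next
    assume "(U has_vector_derivative - compression X xi (U t)) (at t within I)"
    then show "\<exists>D. (?Z has_vector_derivative D) (at t within I) \<and> pr X D = 0"
      using Z_iff linear_0[OF linear_pr] by blast
  qed
qed

lemma parallel_in_moving_frame_iff:
  assumes U: "\<And>s. s \<in> I \<Longrightarrow> U s \<in> S X" and t: "t \<in> I" and nontrivial: "at t within I \<noteq> bot"
  shows "(\<exists>D. ((\<lambda>s. Phi (gexp s xi) (U s)) has_vector_derivative D) (at t within I) \<and>
              pr (Phi (gexp t xi) X) D = 0) \<longleftrightarrow>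
         (U has_vector_derivative - compression X xi (U t)) (at t within I)"
proof -
  let ?K = "compression X xi" and ?W = "\<lambda>s. Phi (gexp s xi) (U s)"
  have og: "orthogonal_pair (gexp t xi)"
    by (rule orthogonal_pair_gexp[OF xi])
  have "pr X (f_xi xi (U t)) = ?K (U t)"
    using U[OF t] by (simp add: compression_def S_eq[OF X])
  then have pr_derivative: "pr (Phi (gexp t xi) X) (Phi (gexp t xi) (f_xi xi (U t) + D)) =
      Phi (gexp t xi) (?K (U t) + pr X D)" for D
    by (simp add: pr_Phi[OF og] linear_add[OF linear_pr])
  show ?thesis
  proof
    assume "\<exists>D. (?W has_vector_derivative D) (at t within I) \<and> pr (Phi (gexp t xi) X) D = 0"
    then obtain DW where DW: "(?W has_vector_derivative DW) (at t within I)"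
      and DW_normal: "pr (Phi (gexp t xi) X) DW = 0" by blast
    define D where "D = Phi (gexp (- t) xi) DW - f_xi xi (U t)"
    have DW_eq: "Phi (gexp t xi) (f_xi xi (U t) + D) = DW"
      using Phi_gexp_inverse[of "- t" xi DW] by (simp add: D_def)
    with DW have "(?W has_vector_derivative Phi (gexp t xi) (f_xi xi (U t) + D)) (at t within I)"
      by simp
    then have D: "(U has_vector_derivative D) (at t within I)"
      by (simp only: has_vector_derivative_Phi_gexp_iff[OF xi])
    have "D - pr X D = 0"
      by (rule has_vector_derivative_in_kernel[OF bounded_linear_id_minus_pr t nontrivial _ D])
        (use U in \<open>simp add: S_eq[OF X]\<close>)
    then have "Phi (gexp t xi) (?K (U t) + D) = 0"
      using pr_derivative[of D] DW_normal DW_eq by simp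
    then have "?K (U t) + D = 0"
      using Phi_gexp_inverse[of t xi "?K (U t) + D"] by (simp add: linear_0[OF linear_Phi])
    then have "D = - ?K (U t)"
      by (simp add: eq_neg_iff_add_eq_0 add.commute)
    then show "(U has_vector_derivative - ?K (U t)) (at t within I)"
      using D by simp
  next
    assume "(U has_vector_derivative - ?K (U t)) (at t within I)"
    then have "(?W has_vector_derivative Phi (gexp t xi) (f_xi xi (U t) + - ?K (U t))) (at t within I)"
      by (simp only: has_vector_derivative_Phi_gexp_iff[OF xi])
    moreover have "pr (Phi (gexp t xi) X) (Phi (gexp t xi) (f_xi xi (U t) + - ?K (U t))) = 0"
      unfolding pr_derivative
      by (simp add: linear_neg[OF linear_pr] pr_compression linear_0[OF linear_Phi])
    ultimately show "\<exists>D. (?W has_vector_derivative D) (at t within I) \<and> pr (Phi (gexp t xi) X) D = 0"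
      by blast
  qed
qed

lemma transport_parallel_iff:
  assumes Z: "\<forall>t\<in>I. Z t \<in> S X"
  shows "tangent_parallel euclid_metric I S (\<lambda>t. Phi (gexp t xi) X) (\<lambda>t. transport X xi t (Z t)) \<longleftrightarrow>
         tangent_parallel euclid_metric I (\<lambda>_. S X) c Z"
proof -
  define U where "U s = op_exp (\<lambda>V. (- s) *\<^sub>R compression X xi V) (Z s)" for s
  have U_S: "U s \<in> S X" if "s \<in> I" for s
    using Z that op_exp_compression_in_S[of "Z s" "- s"] by (simp add: U_def)
  have Z_U: "Z = (\<lambda>s. op_exp (\<lambda>V. s *\<^sub>R compression X xi V) (U s))"
    by (simp add: U_def fun_eq_iff op_exp_inverse[OF linear_compression])
  have W_U: "(\<lambda>s. transport X xi s (Z s)) = (\<lambda>s. Phi (gexp s xi) (U s))"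
    by (simp add: transport_def U_def)
  have pointwise:
    "(\<exists>D. ((\<lambda>s. transport X xi s (Z s)) has_vector_derivative D) (at t within I) \<and>
          pr (Phi (gexp t xi) X) D = 0) \<longleftrightarrow>
     (\<exists>D. (Z has_vector_derivative D) (at t within I) \<and> pr X D = 0)" if t: "t \<in> I" for t
  proof (cases "at t within I = bot")
    case True
    \<comment> \<open>at isolated points of \<open>I\<close> every vector is a derivative\<close>
    then show ?thesis
      using has_vector_derivative_at_within_bot linear_0[OF linear_pr] by blast
  next
    case False
    have "(\<exists>D. (Z has_vector_derivative D) (at t within I) \<and> pr X D = 0) \<longleftrightarrow>
        (U has_vector_derivative - compression X xi (U t)) (at t within I)"
      unfolding Z_U by (rule parallel_in_fixed_frame_iff[OF U_S t False])
    moreover have "(\<exists>D. ((\<lambda>s. transport X xi s (Z s)) has_vector_derivative D) (at t within I) \<and>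
          pr (Phi (gexp t xi) X) D = 0) \<longleftrightarrow>
        (U has_vector_derivative - compression X xi (U t)) (at t within I)"
      unfolding W_U by (rule parallel_in_moving_frame_iff[OF U_S t False])
    ultimately show ?thesis by simp
  qed
  have "Phi (gexp t xi) X \<in> stiefel" for t
    by (rule Phi_stiefel[OF orthogonal_pair_gexp[OF xi] X])
  then show ?thesis
    using Z pointwise transport_in_S
    by (simp add: tangent_parallel_iff[where Y="\<lambda>t. Phi (gexp t xi) X"]
        tangent_parallel_iff[where Y="\<lambda>_. X"] X)
qed

end

end

interpretation tangent: equivariant_projections P_tan stiefel_tangent
proof (rule equivariant_projections.intro)
  fix Y :: "real^'k::finite^'n::finite" and V a b
  show "linear (P_tan Y)" by (rule linear_P_tan)
  assume Y: "Y \<in> stiefel"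
  show "P_tan Y (P_tan Y V) = P_tan Y V"
    by (simp add: P_tan_def linear_diff[OF linear_P_perp] P_perp_idem[OF Y])
  show "P_tan Y a \<bullet> b = a \<bullet> P_tan Y b"
    by (simp add: P_tan_def inner_diff_left inner_diff_right P_perp_self_adjoint[OF Y])
  show "stiefel_tangent Y = {V. P_tan Y V = V}"
    by (rule stiefel_tangent_eq[OF Y])
qed (rule P_tan_Phi)

interpretation normal: equivariant_projections P_perp stiefel_normal
  by (rule equivariant_projections.intro)
    (simp_all add: linear_P_perp P_perp_idem P_perp_self_adjoint P_perp_Phi stiefel_normal_eq)

section \<open>The Lie algebra \<open>so(n) \<times> so(k)\<close> and the tangent space at \<open>X\<close>\<close>

lemma linear_d_iota_pi: "linear (d_iota_pi X)"
  by (simp add: linear_iff d_iota_pi_def matrix_algebra_simps algebra_simps)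

lemma linear_d_iota_pi_inv: "linear (d_iota_pi_inv X)"
  by (simp add: linear_iff d_iota_pi_inv_def matrix_algebra_simps algebra_simps)

lemma skew_pair_lie_br: "skew_pair a \<Longrightarrow> skew_pair b \<Longrightarrow> skew_pair (lie_br a b)"
  by (simp add: skew_pair_def skew_def lie_br_def transpose_diff matrix_transpose_mul
      matrix_algebra_simps)

context
  fixes X :: "real^'k::finite^'n::finite"
  assumes X: "X \<in> stiefel"
begin

lemma stiefel_tangent_transpose_mult:
  assumes "V \<in> stiefel_tangent X"
  shows "transpose V ** X = - (transpose X ** V)"
    and "transpose V ** (X ** M) = - (transpose X ** (V ** M))"
proof -
  show *: "transpose V ** X = - (transpose X ** V)"
    using assms by (simp add: stiefel_tangent_def eq_neg_iff_add_eq_0 add.commute)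
  show "transpose V ** (X ** M) = - (transpose X ** (V ** M))"
    by (simp add: matrix_mul_assoc * matrix_algebra_simps)
qed

lemma d_iota_pi_tangent: "skew_pair y \<Longrightarrow> d_iota_pi X y \<in> stiefel_tangent X"
  by (simp add: stiefel_tangent_def d_iota_pi_def skew_pair_def skew_def matrix_algebra_simps
      transpose_stiefel_mult[OF X] transpose_stiefel_self[OF X] flip: matrix_mul_assoc)

lemma skew_pair_d_iota_pi_inv: "V \<in> stiefel_tangent X \<Longrightarrow> skew_pair (d_iota_pi_inv X V)"
  by (simp add: skew_pair_def skew_def d_iota_pi_inv_def matrix_algebra_simps
      stiefel_tangent_transpose_mult)

lemma d_iota_pi_d_iota_pi_inv: "V \<in> stiefel_tangent X \<Longrightarrow> d_iota_pi X (d_iota_pi_inv X V) = V"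
  by (simp add: d_iota_pi_def d_iota_pi_inv_def matrix_algebra_simps transpose_stiefel_mult[OF X]
      transpose_stiefel_self[OF X] stiefel_tangent_transpose_mult flip: matrix_mul_assoc)

lemma pr_p_eq: "skew_pair y \<Longrightarrow> pr_p X y = d_iota_pi_inv X (d_iota_pi X y)"
  by (simp add: pr_p_def d_iota_pi_def d_iota_pi_inv_def skew_pair_def skew_def
      matrix_algebra_simps transpose_stiefel_mult[OF X] transpose_stiefel_self[OF X] prod_eq_iff
      scaleR_2 algebra_simps flip: matrix_mul_assoc)

text \<open>The hypothesis \<open>A ** X = X ** B\<close> says that \<open>(A, B)\<close> lies in the isotropy algebra \<open>\<hh>\<close>.\<close>

context
  fixes A :: "real^'n^'n" and B :: "real^'k^'k"
  assumes A: "skew A" and B: "skew B" and isotropy: "A ** X = X ** B"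
begin

lemma isotropy_mult: "A ** (X ** M) = X ** (B ** M)"
  by (simp add: matrix_mul_assoc isotropy)

lemma isotropy_transpose: "transpose X ** A = B ** transpose X"
proof -
  have "transpose (A ** X) = transpose (X ** B)"
    by (simp add: isotropy)
  then show ?thesis
    using A B by (simp add: matrix_transpose_mul skew_def matrix_algebra_simps)
qed

lemma isotropy_transpose_mult: "transpose X ** (A ** M) = B ** (transpose X ** M)"
  by (simp add: matrix_mul_assoc isotropy_transpose)

lemma lie_br_isotropy: "lie_br (A, B) (d_iota_pi_inv X V) = d_iota_pi_inv X (f_xi (A, B) V)"
  using A B
  by (simp add: lie_br_def d_iota_pi_inv_def f_xi_def skew_def matrix_algebra_simps
      isotropy isotropy_mult isotropy_transpose isotropy_transpose_mult prod_eq_iff algebra_simps flip: matrix_mul_assoc)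

lemma f_xi_isotropy_tangent:
  assumes "V \<in> stiefel_tangent X"
  shows "f_xi (A, B) V \<in> stiefel_tangent X"
proof -
  have "transpose X ** f_xi (A, B) V + transpose (f_xi (A, B) V) ** X = 0"
    using A B
    by (simp add: f_xi_def skew_def matrix_algebra_simps isotropy isotropy_mult isotropy_transpose
        isotropy_transpose_mult stiefel_tangent_transpose_mult[OF assms] algebra_simps
        flip: matrix_mul_assoc)
  then show ?thesis
    by (simp add: stiefel_tangent_def)
qed

end

lemma d_iota_pi_lie_br:
  assumes W: "W \<in> stiefel_tangent X" and V: "V \<in> stiefel_tangent X"
  shows "d_iota_pi X (lie_br (d_iota_pi_inv X W) (d_iota_pi_inv X V)) =
    2 *\<^sub>R P_tan X (f_xi (d_iota_pi_inv X W) V)"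
proof -
  let ?E = "W ** (transpose X ** V) + W ** (transpose X ** V) - X ** (transpose W ** V)
     - V ** (transpose X ** W) - V ** (transpose X ** W) + X ** (transpose V ** W)"
  have "d_iota_pi X (lie_br (d_iota_pi_inv X W) (d_iota_pi_inv X V)) = ?E"
    by (simp add: lie_br_def d_iota_pi_def d_iota_pi_inv_def matrix_algebra_simps
        transpose_stiefel_mult[OF X] transpose_stiefel_self[OF X] stiefel_tangent_transpose_mult[OF V]
        stiefel_tangent_transpose_mult[OF W] algebra_simps flip: matrix_mul_assoc)
  moreover have "2 *\<^sub>R P_tan X (f_xi (d_iota_pi_inv X W) V) = ?E"
    by (simp add: P_tan_def f_xi_def P_perp_def d_iota_pi_inv_def matrix_algebra_simps
        transpose_stiefel_mult[OF X] transpose_stiefel_self[OF X] stiefel_tangent_transpose_mult[OF V]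
        stiefel_tangent_transpose_mult[OF W] scaleR_2 algebra_simps flip: matrix_mul_assoc)
  ultimately show ?thesis by simp
qed

end

lemma linear_Lop: "linear (Lop X xi)"
proof -
  have ad: "linear (ad x)" for x :: "('n::finite,'k::finite) lalg"
    by (simp add: linear_iff ad_def lie_br_def matrix_algebra_simps algebra_simps prod_eq_iff)
  have pr_p: "linear (pr_p X)"
    by (simp add: linear_iff pr_p_def matrix_algebra_simps algebra_simps prod_eq_iff)
  show ?thesis
    unfolding Lop_def[abs_def]
    by (intro linear_compose_add ad linear_compose_scale_right
        linear_compose[OF ad pr_p, unfolded o_def])
qed

lemma f_xi_add: "f_xi (a + b) V = f_xi a V + f_xi b V"
  by (simp add: f_xi_def matrix_algebra_simps algebra_simps)

context
  fixes X :: "real^'k::finite^'n::finite" and xi :: "('n,'k) lalg"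
  assumes X: "X \<in> stiefel" and xi: "skew_pair xi"
begin

lemma xi_p_eq: "xi_p X xi = d_iota_pi_inv X (d_iota_pi X xi)"
  by (simp add: xi_p_def pr_p_eq[OF X xi])

lemma skew_pair_xi_p: "skew_pair (xi_p X xi)"
  by (simp add: xi_p_eq skew_pair_d_iota_pi_inv[OF X d_iota_pi_tangent[OF X xi]])

lemma skew_pair_xi_h: "skew_pair (xi_h X xi)"
  using xi skew_pair_xi_p by (simp add: skew_pair_def xi_h_def skew_def transpose_diff)

lemma xi_h_isotropy: "fst (xi_h X xi) ** X = X ** snd (xi_h X xi)"
proof -
  have "d_iota_pi X (xi_h X xi) = 0"
    using d_iota_pi_d_iota_pi_inv[OF X d_iota_pi_tangent[OF X xi]]
    by (simp add: xi_h_def xi_p_eq linear_diff[OF linear_d_iota_pi])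
  then show ?thesis
    by (simp add: d_iota_pi_def)
qed

lemma Lop_d_iota_pi_inv:
  assumes V: "V \<in> stiefel_tangent X"
  shows "Lop X xi (d_iota_pi_inv X V) = d_iota_pi_inv X (P_tan X (f_xi xi V))"
proof -
  let ?h = "xi_h X xi" and ?p = "xi_p X xi" and ?y = "d_iota_pi_inv X V"
  have skew_h: "skew (fst ?h)" "skew (snd ?h)"
    using skew_pair_xi_h by (simp_all add: skew_pair_def)
  have "ad ?h ?y = d_iota_pi_inv X (f_xi ?h V)"
    using lie_br_isotropy[OF X skew_h xi_h_isotropy] by (simp add: ad_def)
  moreover have "pr_p X (ad ?p ?y) = d_iota_pi_inv X (2 *\<^sub>R P_tan X (f_xi ?p V))"
    using pr_p_eq[OF X skew_pair_lie_br[OF skew_pair_xi_p skew_pair_d_iota_pi_inv[OF X V]]]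
      d_iota_pi_lie_br[OF X d_iota_pi_tangent[OF X xi] V]
    by (simp add: ad_def xi_p_eq)
  moreover have "P_tan X (f_xi ?h V) = f_xi ?h V"
    using f_xi_isotropy_tangent[OF X skew_h xi_h_isotropy V]
    by (simp add: P_tan_def stiefel_tangent_iff[OF X])
  moreover have "f_xi xi V = f_xi ?h V + f_xi ?p V"
    by (simp add: xi_h_def flip: f_xi_add)
  ultimately show ?thesis
    by (simp add: Lop_def linear_add[OF linear_d_iota_pi_inv] linear_scale[OF linear_d_iota_pi_inv]
        linear_add[OF linear_P_tan])
qed

lemma op_exp_Lop_d_iota_pi_inv:
  assumes V: "V \<in> stiefel_tangent X"
  shows "op_exp (\<lambda>y. s *\<^sub>R Lop X xi y) (d_iota_pi_inv X V) =
    d_iota_pi_inv X (op_exp (\<lambda>V. s *\<^sub>R tangent.compression X xi V) V)"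
proof -
  let ?T = "\<lambda>V. d_iota_pi_inv X (P_tan X V)"
  have T: "bounded_linear ?T"
    using linear_compose[OF linear_P_tan linear_d_iota_pi_inv]
    by (simp add: o_def linear_conv_bounded_linear)
  have tangent: "P_tan X W = W" if "W \<in> stiefel_tangent X" for W
    using that by (simp add: P_tan_def stiefel_tangent_iff[OF X])
  have "?T (tangent.compression X xi v) = Lop X xi (?T v)" for v
    using Lop_d_iota_pi_inv[OF tangent.pr_in_S[OF X]] tangent.pr_idem[OF X]
    by (simp add: tangent.compression_def)
  then have "?T (op_exp (\<lambda>V. s *\<^sub>R tangent.compression X xi V) V) =
      op_exp (\<lambda>y. s *\<^sub>R Lop X xi y) (?T V)"
    by (rule op_exp_intertwine[OF tangent.linear_compression linear_Lop T])
  then show ?thesis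
    using tangent.op_exp_compression_in_S[OF X xi V] by (simp add: tangent V)
qed

end

lemma integral0_eq_diff:
  fixes g :: "real \<Rightarrow> 'a::banach"
  assumes g: "continuous_on UNIV g" and a: "a \<le> 0" "a \<le> x"
  shows "integral0 x g = integral {a..x} g - integral {a..0} g"
proof (cases "0 \<le> x")
  case True
  have "integral {a..0} g + integral {0..x} g = integral {a..x} g"
    using True a
    by (intro Henstock_Kurzweil_Integration.integral_combine integrable_continuous_interval
        continuous_on_subset[OF g]) auto
  then show ?thesis using True by (simp add: integral0_def algebra_simps)
next
  case False
  have "integral {a..x} g + integral {x..0} g = integral {a..0} g"
    using False a
    by (intro Henstock_Kurzweil_Integration.integral_combine integrable_continuous_interval
        continuous_on_subset[OF g]) auto
  then show ?thesis using False by (simp add: integral0_def algebra_simps)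
qed

lemma has_vector_derivative_integral0:
  fixes g :: "real \<Rightarrow> 'a::banach"
  assumes g: "continuous_on UNIV g"
  shows "((\<lambda>t. integral0 t g) has_vector_derivative g t) (at t within I)"
proof -
  define a where "a = min 0 t - 1"
  define b where "b = max 0 t + 1"
  have t: "t \<in> {a<..<b}"
    by (simp add: a_def b_def min_def max_def)
  have "((\<lambda>u. integral {a..u} g) has_vector_derivative g t) (at t within {a..b})"
    using t by (intro integral_has_vector_derivative continuous_on_subset[OF g]) auto
  moreover have "at t within {a..b} = at t"
    using t by (intro at_within_interior) simp
  ultimately have "((\<lambda>u. integral {a..u} g - integral {a..0} g) has_vector_derivative g t) (at t)"
    using has_vector_derivative_diff[OF _ has_vector_derivative_const] by fastforce
  then have "((\<lambda>u. integral0 u g) has_vector_derivative g t) (at t)"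
    by (rule has_vector_derivative_transform_within_open[OF _ open_greaterThanLessThan t])
      (subst integral0_eq_diff[OF g, of a], auto simp: a_def)
  then show ?thesis
    by (rule has_vector_derivative_at_within)
qed

lemma integral0_bounded_linear:
  fixes g :: "real \<Rightarrow> 'a::banach" and h :: "'a \<Rightarrow> 'b::banach"
  assumes h: "bounded_linear h" and g: "continuous_on UNIV g"
  shows "h (integral0 t g) = integral0 t (\<lambda>s. h (g s))"
proof -
  have i: "g integrable_on {u..v}" for u v
    by (rule integrable_continuous_interval[OF continuous_on_subset[OF g]]) simp
  show ?thesis
    using integral_linear[OF i h, of 0 t] integral_linear[OF i h, of t 0]
    by (simp add: integral0_def o_def linear_neg[OF bounded_linear.linear[OF h]])
qed

context
  fixes X :: "real^'k::finite^'n::finite" and xi :: "('n,'k) lalg"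
  assumes X: "X \<in> stiefel" and xi: "skew_pair xi"
begin

lemma Phi_gexp_xi_h: "Phi (gexp t (xi_h X xi)) X = X"
proof -
  have "mexp (t *\<^sub>R fst (xi_h X xi)) ** X = X ** mexp (t *\<^sub>R snd (xi_h X xi))"
    by (rule mexp_intertwine[OF xi_h_isotropy[OF X xi]])
  then show ?thesis
    using orthogonal_pair_gexp[OF skew_pair_xi_h[OF X xi], of t]
    by (simp add: Phi_def gexp_def orthogonal_pair_def orthogonal_matrix_def flip: matrix_mul_assoc)
qed

lemma roll_q_gexp_xi_h:
  "(fst (roll_q X xi t) ** fst (gexp t (xi_h X xi)), snd (roll_q X xi t) ** snd (gexp t (xi_h X xi)))
    = gexp t xi"
  using mexp_inverse[of "- t" "fst (xi_h X xi)"] mexp_inverse[of "- t" "snd (xi_h X xi)"]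
  by (simp add: roll_q_def gexp_def flip: matrix_mul_assoc)

lemma d_iota_pi_Ad:
  assumes h: "orthogonal_pair h" and fix_X: "Phi h X = X"
  shows "d_iota_pi X (Ad h y) = Phi h (d_iota_pi X y)"
proof -
  have h1: "orthogonal_matrix (fst h)" and h2: "orthogonal_matrix (snd h)"
    using h by (simp_all add: orthogonal_pair_def)
  have "transpose (fst h) ** X = X ** transpose (snd h)"
    using fix_X h1 by (metis Phi_def matrix_mul_assoc orthogonal_matrix_cancel(1))
  moreover have "X ** snd h = fst h ** X"
    using fix_X h2 by (metis Phi_def orthogonal_matrix_cancel(3))
  then have "X ** (snd h ** M) = fst h ** (X ** M)" for M :: "real^'k^'k"
    by (simp add: matrix_mul_assoc)
  ultimately show ?thesis
    by (simp add: Ad_def d_iota_pi_def Phi_def matrix_inv_orthogonal[OF h1] matrix_inv_orthogonal[OF h2]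
        matrix_algebra_simps flip: matrix_mul_assoc)
qed

lemma Phi_roll_q_Phi_gexp_xi_h: "Phi (roll_q X xi t) (Phi (gexp t (xi_h X xi)) V) = Phi (gexp t xi) V"
  by (simp add: Phi_Phi roll_q_gexp_xi_h)

lemma roll_B_eq_transport:
  assumes V: "V \<in> stiefel_tangent X"
  shows "roll_B X xi t V = tangent.transport X xi t V"
proof -
  let ?E = "op_exp (\<lambda>V. (- t) *\<^sub>R tangent.compression X xi V)"
  have "roll_B X xi t V =
      Phi (gexp t xi) (d_iota_pi X (op_exp (\<lambda>y. (- t) *\<^sub>R Lop X xi y) (d_iota_pi_inv X V)))"
    using orthogonal_pair_gexp[OF skew_pair_xi_h[OF X xi]]
    by (simp add: roll_B_def roll_S_def d_iota_pi_Ad Phi_gexp_xi_h Phi_roll_q_Phi_gexp_xi_h)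
  also have "\<dots> = Phi (gexp t xi) (d_iota_pi X (d_iota_pi_inv X (?E V)))"
    by (simp only: op_exp_Lop_d_iota_pi_inv[OF X xi V])
  also have "\<dots> = tangent.transport X xi t V"
    using tangent.op_exp_compression_in_S[OF X xi V, of "- t"]
    by (simp add: d_iota_pi_d_iota_pi_inv[OF X] tangent.transport_def)
  finally show ?thesis .
qed

lemma roll_C_eq_transport:
  assumes V: "V \<in> stiefel_normal X"
  shows "roll_C X xi t V = normal.transport X xi t V"
proof -
  let ?E = "op_exp (\<lambda>V. (- t) *\<^sub>R normal.compression X xi V)"
  have "P_perp X (?E V) = op_exp (\<lambda>V. (- t) *\<^sub>R P_perp X (f_xi xi V)) (P_perp X V)"
    using P_perp_idem[OF X] linear_compose[OF linear_f_xi linear_P_perp]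
    by (intro op_exp_intertwine[OF normal.linear_compression])
      (simp_all add: o_def normal.compression_def linear_conv_bounded_linear[symmetric] linear_P_perp)
  moreover have "P_perp X (?E V) = ?E V" "P_perp X V = V"
    using normal.op_exp_compression_in_S[OF X xi V, of "- t"] V by (simp_all add: stiefel_normal_iff[OF X])
  ultimately show ?thesis
    by (simp add: roll_C_def roll_T_def Phi_roll_q_Phi_gexp_xi_h normal.transport_def)
qed

lemma f_xi_tangent: "f_xi xi X \<in> stiefel_tangent X"
  using d_iota_pi_tangent[OF X xi] by (simp add: d_iota_pi_def f_xi_def)

lemma roll_beta_eq:
  "roll_beta X xi t = integral0 t (\<lambda>s. op_exp (\<lambda>V. s *\<^sub>R tangent.compression X xi V) (f_xi xi X))"
proof -
  let ?g = "\<lambda>s. op_exp (\<lambda>V. s *\<^sub>R tangent.compression X xi V) (f_xi xi X)"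
  have "op_exp (\<lambda>y. s *\<^sub>R Lop X xi y) (xi_p X xi) = d_iota_pi_inv X (?g s)" for s
    using op_exp_Lop_d_iota_pi_inv[OF X xi f_xi_tangent]
    by (simp add: xi_p_eq[OF X xi] d_iota_pi_def f_xi_def)
  then have "roll_beta X xi t = d_iota_pi X (integral0 t (\<lambda>s. d_iota_pi_inv X (?g s)))"
    by (simp add: roll_beta_def roll_alpha_def)
  also have "\<dots> = integral0 t (\<lambda>s. d_iota_pi X (d_iota_pi_inv X (?g s)))"
    by (intro integral0_bounded_linear bounded_linear.continuous_on[OF _ continuous_on_op_exp])
      (simp_all add: linear_conv_bounded_linear[symmetric] linear_d_iota_pi linear_d_iota_pi_inv
        tangent.linear_compression)
  also have "\<dots> = integral0 t ?g"
    using tangent.op_exp_compression_in_S[OF X xi f_xi_tangent]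
    by (simp add: d_iota_pi_d_iota_pi_inv[OF X])
  finally show ?thesis .
qed

lemma has_vector_derivative_roll_beta:
  "(roll_beta X xi has_vector_derivative op_exp (\<lambda>V. t *\<^sub>R tangent.compression X xi V) (f_xi xi X))
    (at t within I)"
  unfolding roll_beta_eq[abs_def]
  by (rule has_vector_derivative_integral0[OF continuous_on_op_exp[OF tangent.linear_compression]])

lemma roll_beta_tangent: "roll_beta X xi t \<in> stiefel_tangent X"
proof -
  have "P_perp X (roll_beta X xi t) =
      integral0 t (\<lambda>s. P_perp X (op_exp (\<lambda>V. s *\<^sub>R tangent.compression X xi V) (f_xi xi X)))"
    by (simp add: roll_beta_eq linear_conv_bounded_linear[symmetric] linear_P_perp
        integral0_bounded_linear continuous_on_op_exp tangent.linear_compression)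
  also have "\<dots> = 0"
    using tangent.op_exp_compression_in_S[OF X xi f_xi_tangent]
    by (simp add: stiefel_tangent_iff[OF X] integral0_def)
  finally show ?thesis
    by (simp add: stiefel_tangent_iff[OF X])
qed

lemma has_vector_derivative_roll_beta_hat:
  "(roll_beta_hat X xi has_vector_derivative
      roll_B X xi t (op_exp (\<lambda>V. t *\<^sub>R tangent.compression X xi V) (f_xi xi X))) (at t within I)"
  using has_vector_derivative_Phi_gexp[OF xi has_vector_derivative_const, of X t I]
    tangent.op_exp_compression_in_S[OF X xi f_xi_tangent]
  by (simp add: roll_beta_hat_def[abs_def] roll_B_eq_transport tangent.transport_def
      op_exp_inverse[OF tangent.linear_compression])

lemma roll_beta_hat_stiefel: "roll_beta_hat X xi t \<in> stiefel"
  by (simp add: roll_beta_hat_def Phi_stiefel[OF orthogonal_pair_gexp[OF xi] X])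

lemma roll_B_lin_isometry:
  "lin_isometry euclid_metric (stiefel_tangent X) (stiefel_tangent (roll_beta_hat X xi t)) (roll_B X xi t)"
  unfolding roll_beta_hat_def
  by (rule lin_isometry_cong[OF tangent.subspace_S[OF X] roll_B_eq_transport
        tangent.transport_lin_isometry[OF X xi]])

lemma roll_C_lin_isometry:
  "lin_isometry euclid_metric (stiefel_normal X) (stiefel_normal (roll_beta_hat X xi t)) (roll_C X xi t)"
  unfolding roll_beta_hat_def
  by (rule lin_isometry_cong[OF normal.subspace_S[OF X] roll_C_eq_transport
        normal.transport_lin_isometry[OF X xi]])

lemma roll_B_parallel_iff:
  assumes "\<forall>t\<in>I. Z t \<in> stiefel_tangent X"
  shows "tangent_parallel euclid_metric I stiefel_tangent (roll_beta_hat X xi) (\<lambda>t. roll_B X xi t (Z t)) \<longleftrightarrow>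
    tangent_parallel euclid_metric I (\<lambda>_. stiefel_tangent X) (roll_beta X xi) Z"
proof -
  have "tangent_parallel euclid_metric I stiefel_tangent (roll_beta_hat X xi) (\<lambda>t. roll_B X xi t (Z t)) =
      tangent_parallel euclid_metric I stiefel_tangent (\<lambda>t. Phi (gexp t xi) X)
        (\<lambda>t. tangent.transport X xi t (Z t))"
    unfolding roll_beta_hat_def[abs_def] using assms
    by (intro tangent_parallel_cong) (simp add: roll_B_eq_transport)
  then show ?thesis
    using tangent.transport_parallel_iff[OF X xi assms] by simp
qed

lemma roll_C_normal_parallel_iff:
  assumes "\<forall>t\<in>I. Z t \<in> stiefel_normal X"
  shows "normal_parallel euclid_metric I stiefel_normal (roll_beta_hat X xi) (\<lambda>t. roll_C X xi t (Z t)) \<longleftrightarrow>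
    normal_parallel euclid_metric I (\<lambda>_. stiefel_normal X) (roll_beta X xi) Z"
proof -
  have "tangent_parallel euclid_metric I stiefel_normal (roll_beta_hat X xi) (\<lambda>t. roll_C X xi t (Z t)) =
      tangent_parallel euclid_metric I stiefel_normal (\<lambda>t. Phi (gexp t xi) X)
        (\<lambda>t. normal.transport X xi t (Z t))"
    unfolding roll_beta_hat_def[abs_def] using assms
    by (intro tangent_parallel_cong) (simp add: roll_C_eq_transport)
  then show ?thesis
    using normal.transport_parallel_iff[OF X xi assms] by (simp add: normal_parallel_eq_tangent_parallel)
qed

end

theorem proposition5p18:
  fixes X :: "real^'k::finite^'n::finite" and xi :: "('n,'k) lalg" and I :: "real set"
  assumes "skew (fst xi)" and "skew (snd xi)"
    and "X \<in> stiefel"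
    and "is_interval I"
  shows "extrinsic_rolling euclid_metric I
           (stiefel_tangent X) (\<lambda>_. stiefel_tangent X) (\<lambda>_. stiefel_normal X)
           stiefel stiefel_tangent stiefel_normal
           (roll_beta X xi) (roll_beta_hat X xi) (roll_B X xi) (roll_C X xi)"
proof -
  have xi: "skew_pair xi" and X: "X \<in> stiefel"
    using assms by (simp_all add: skew_pair_def)
  show ?thesis
    unfolding extrinsic_rolling_def
    using roll_beta_tangent[OF X xi] roll_beta_hat_stiefel[OF X xi]
      roll_B_lin_isometry[OF X xi] roll_C_lin_isometry[OF X xi]
      has_vector_derivative_roll_beta[OF X xi] has_vector_derivative_roll_beta_hat[OF X xi]
      roll_B_parallel_iff[OF X xi] roll_C_normal_parallel_iff[OF X xi]
    by blast
qed

end
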